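(* Let $K\ge2$, $\sigma^2>0$, $\bm\theta\in\Theta$, and let $(\beta_K,\beta_{K-1},\dots,\beta_2)$ be nonnegative batch weights summing to $1$. Then the batched arm elimination design $\mathtt{BAE}$ with these weights satisfies $$\mathfrak e^{\mathtt{BAE}}_{\bm\theta}\ \ge\ \min_{n\in\{K,K-1,\dots,2\}} w_n\,\Gamma_{\bm\theta,n}.$$
   Context: Sampling model: $K$ arms with unknown $\bm\theta\in\mathbb{R}^K$; potential outcomes $Y_{t,i}$ ($t\in[T]$, $i\in[K]$) are independent with $Y_{t,i}\sim\mathcal N(\theta_i,\sigma^2)$, $\sigma^2>0$ known. A policy chooses $I_t$ based on the past history of chosen arms and observed outcomes, observes only $Y_{t,I_t}$, and outputs a deployed arm $\hat I_T$ after $T$ units. $\Theta$: set of $\bm\theta$ with a unique best arm $I^*=\arg\max_i\theta_i$. Regret: $\mathfrak R^\pi_{\bm\theta,T}=\max_i\theta_i-\mathbb E^\pi_{\bm\theta,T}[\theta_{\hat I_T}]$; efficiency exponent $\mathfrak e^\pi_{\bm\theta}=\liminf_{T\to\infty}-\frac1T\ln\mathfrak R^\pi_{\bm\theta,T}$. Batched arm elimination (BAE) with weights $(\beta_K,\dots,\beta_2)$: maintain a candidate set $C$, initially $[K]$. Let $N_{t,i}$ be the number of units among the first $t$ assigned to arm $i$ and $m_{t,i}$ the empirical mean of the observed outcomes of arm $i$ among them ($0$ if $N_{t,i}=0$). For $t=1,\dots,T$: assign $I_t\in\arg\min_{i\in C}N_{t-1,i}$ (round robin, ties broken arbitrarily).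 For $n=K,K-1,\dots,2$ let $T_n=(\beta_K+\dots+\beta_n)T$ (rounded to an integer); at time $t=T_n$ (processing $n$ in decreasing order when several $T_n$ coincide), the current candidate set $C_n$ has $n$ arms and an arm $\ell_n\in\arg\min_{i\in C_n}m_{t,i}$ is removed from $C$. The output $\hat I_T$ is the single remaining arm. Define $w_n=\frac{\beta_K}{K}+\frac{\beta_{K-1}}{K-1}+\dots+\frac{\beta_n}{n}$. Let $\mathcal J_{\bm\theta,n}=\{J\subseteq[K]:|J|=n,\ I^*\in J\}$, $\Lambda_{\bm\theta,J}=\{\bm\lambda\in\mathbb R^K:\lambda_{I^*}\le\min_{i\in J}\lambda_i\}$, and $$\Gamma_{\bm\theta,n}=\min_{J\in\mathcal J_{\bm\theta,n}}\ \inf_{\bm\lambda\in\Lambda_{\bm\theta,J}}\sum_{i\in J}\frac{(\lambda_i-\theta_i)^2}{2\sigma^2}.$$ *)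

theory Defs
  imports "HOL-Probability.Probability"
begin

text \<open>Arms are indexed by 0,...,K-1; units by 1..T, where the outcome of unit t
  on arm i is Y (t-1, i). The noise standard deviation is sigma (variance sigma^2).\<close>

definition unique_best :: "nat \<Rightarrow> (nat \<Rightarrow> real) \<Rightarrow> bool" where
  "unique_best K \<theta> \<longleftrightarrow> (\<exists>i<K. \<forall>j<K. j \<noteq> i \<longrightarrow> \<theta> j < \<theta> i)"

definition best_arm :: "nat \<Rightarrow> (nat \<Rightarrow> real) \<Rightarrow> nat" where
  "best_arm K \<theta> = (THE i. i < K \<and> (\<forall>j<K. j \<noteq> i \<longrightarrow> \<theta> j < \<theta> i))"

definition wgt :: "nat \<Rightarrow> (nat \<Rightarrow> real) \<Rightarrow> nat \<Rightarrow> real" where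
  "wgt K \<beta> n = (\<Sum>m\<in>{n..K}. \<beta> m / real m)"

definition Gamma :: "nat \<Rightarrow> real \<Rightarrow> (nat \<Rightarrow> real) \<Rightarrow> nat \<Rightarrow> real" where
  "Gamma K \<sigma> \<theta> n =
     Min ((\<lambda>J. Inf ((\<lambda>lam. \<Sum>i\<in>J. (lam i - \<theta> i)\<^sup>2 / (2 * \<sigma>\<^sup>2)) `
                     {lam. \<forall>i\<in>J. lam (best_arm K \<theta>) \<le> lam i}))
          ` {J. J \<subseteq> {..<K} \<and> card J = n \<and> best_arm K \<theta> \<in> J})"

definition elim_time :: "nat \<Rightarrow> (nat \<Rightarrow> real) \<Rightarrow> nat \<Rightarrow> nat \<Rightarrow> nat" where
  "elim_time K \<beta> T n = nat \<lfloor>(\<Sum>m\<in>{n..K}. \<beta> m) * real T\<rfloor>"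

text \<open>State: candidate set, counts N, sums of observed outcomes S.\<close>
type_synonym bae_state = "nat set \<times> (nat \<Rightarrow> nat) \<times> (nat \<Rightarrow> real)"

definition emp_mean :: "(nat \<Rightarrow> nat) \<Rightarrow> (nat \<Rightarrow> real) \<Rightarrow> nat \<Rightarrow> real" where
  "emp_mean N S i = (if N i = 0 then 0 else S i / real (N i))"

text \<open>Tie-breaking rules: tb T t A selects an element of the tie set A
  (for assignment at unit t resp. elimination at time t, horizon T).\<close>

definition elim_one ::
  "(nat \<Rightarrow> nat \<Rightarrow> nat set \<Rightarrow> nat) \<Rightarrow> nat \<Rightarrow> (nat \<Rightarrow> real) \<Rightarrow> nat \<Rightarrow> nat \<Rightarrow> bae_state \<Rightarrow> nat \<Rightarrow> bae_state" where
  "elim_one te K \<beta> T t st n =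
     (case st of (C, N, S) \<Rightarrow>
        if elim_time K \<beta> T n = t
        then (C - {te T t {i \<in> C. \<forall>j\<in>C. emp_mean N S i \<le> emp_mean N S j}}, N, S)
        else (C, N, S))"

definition elim_all ::
  "(nat \<Rightarrow> nat \<Rightarrow> nat set \<Rightarrow> nat) \<Rightarrow> nat \<Rightarrow> (nat \<Rightarrow> real) \<Rightarrow> nat \<Rightarrow> nat \<Rightarrow> bae_state \<Rightarrow> bae_state" where
  "elim_all te K \<beta> T t st = foldl (elim_one te K \<beta> T t) st (rev [2..<Suc K])"

definition assign_step ::
  "(nat \<Rightarrow> nat \<Rightarrow> nat set \<Rightarrow> nat) \<Rightarrow> nat \<Rightarrow> nat \<Rightarrow> (nat \<times> nat \<Rightarrow> real) \<Rightarrow> bae_state \<Rightarrow> bae_state" where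
  "assign_step ta T t Y st =
     (case st of (C, N, S) \<Rightarrow>
        let i = ta T (Suc t) {i \<in> C. \<forall>j\<in>C. N i \<le> N j}
        in (C, N(i := Suc (N i)), S(i := S i + Y (t, i))))"

text \<open>bae_run ... t Y = state after the first t units (and eliminations at time t).\<close>
fun bae_run ::
  "(nat \<Rightarrow> nat \<Rightarrow> nat set \<Rightarrow> nat) \<Rightarrow> (nat \<Rightarrow> nat \<Rightarrow> nat set \<Rightarrow> nat) \<Rightarrow> nat \<Rightarrow> (nat \<Rightarrow> real)
    \<Rightarrow> nat \<Rightarrow> (nat \<times> nat \<Rightarrow> real) \<Rightarrow> nat \<Rightarrow> bae_state" where
  "bae_run ta te K \<beta> T Y 0 = elim_all te K \<beta> T 0 ({..<K}, \<lambda>_. 0, \<lambda>_. 0)"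
| "bae_run ta te K \<beta> T Y (Suc t) =
     elim_all te K \<beta> T (Suc t) (assign_step ta T t Y (bae_run ta te K \<beta> T Y t))"

definition bae_output ::
  "(nat \<Rightarrow> nat \<Rightarrow> nat set \<Rightarrow> nat) \<Rightarrow> (nat \<Rightarrow> nat \<Rightarrow> nat set \<Rightarrow> nat) \<Rightarrow> nat \<Rightarrow> (nat \<Rightarrow> real)
    \<Rightarrow> nat \<Rightarrow> (nat \<times> nat \<Rightarrow> real) \<Rightarrow> nat" where
  "bae_output ta te K \<beta> T Y = the_elem (fst (bae_run ta te K \<beta> T Y T))"

definition outcome_measure :: "nat \<Rightarrow> real \<Rightarrow> (nat \<Rightarrow> real) \<Rightarrow> nat \<Rightarrow> (nat \<times> nat \<Rightarrow> real) measure" where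
  "outcome_measure K \<sigma> \<theta> T =
     PiM ({..<T} \<times> {..<K}) (\<lambda>(t, i). density lborel (normal_density (\<theta> i) \<sigma>))"

definition bae_regret ::
  "(nat \<Rightarrow> nat \<Rightarrow> nat set \<Rightarrow> nat) \<Rightarrow> (nat \<Rightarrow> nat \<Rightarrow> nat set \<Rightarrow> nat) \<Rightarrow> nat \<Rightarrow> real \<Rightarrow> (nat \<Rightarrow> real)
    \<Rightarrow> (nat \<Rightarrow> real) \<Rightarrow> nat \<Rightarrow> real" where
  "bae_regret ta te K \<sigma> \<theta> \<beta> T =
     Max (\<theta> ` {..<K}) - (\<integral>Y. \<theta> (bae_output ta te K \<beta> T Y) \<partial>outcome_measure K \<sigma> \<theta> T)"

definition bae_exponent ::
  "(nat \<Rightarrow> nat \<Rightarrow> nat set \<Rightarrow> nat) \<Rightarrow> (nat \<Rightarrow> nat \<Rightarrow> nat set \<Rightarrow> nat) \<Rightarrow> nat \<Rightarrow> real \<Rightarrow> (nat \<Rightarrow> real)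
    \<Rightarrow> (nat \<Rightarrow> real) \<Rightarrow> ereal" where
  "bae_exponent ta te K \<sigma> \<theta> \<beta> =
     liminf (\<lambda>T. ereal (- ln (bae_regret ta te K \<sigma> \<theta> \<beta> T) / real T))"

end

theory Submission
  imports Defs
begin

text \<open>For a fixed elimination order p (p n is the arm removed when n arms remain) the run is
  deterministic, and round robin gives every survivor of stage n about T w_n pulls by the
  time of the n-th elimination. The actual run follows the order determined by the outcomes,
  and it outputs a wrong arm only if at some stage n the best arm has the lowest empirical
  mean among the n survivors. A union bound over the finitely many orders and stages, with a
  Gaussian Chernoff bound for each event whose exponential tilt is the optimal alternative
  in \<Gamma>_n, gives P(error) \<le> C \<Sum>_n exp (- T w_n \<Gamma>_n). The regret lies between
  two positive multiples of P(error), which yields the exponent.\<close>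

lemma minimizers_nonempty:
  fixes f :: "'a \<Rightarrow> 'b::linorder"
  assumes "finite C" "C \<noteq> {}"
  shows "{i\<in>C. \<forall>j\<in>C. f i \<le> f j} \<noteq> {}"
proof -
  obtain i where "i \<in> C" "f i = Min (f ` C)"
    using assms by (metis (mono_tags) Min_in finite_imageI image_iff image_is_empty)
  then show ?thesis using assms by auto
qed

lemma wgt_unfold: "m \<le> K \<Longrightarrow> wgt K \<beta> m = \<beta> m / real m + wgt K \<beta> (Suc m)"
  unfolding wgt_def by (simp add: sum.atLeast_Suc_atMost)

lemma wgt_nonneg: "\<forall>m\<in>{2..K}. \<beta> m \<ge> 0 \<Longrightarrow> 2 \<le> n \<Longrightarrow> 0 \<le> wgt K \<beta> n"
  unfolding wgt_def by (intro sum_nonneg) auto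

section \<open>The run under a fixed elimination order\<close>

locale bae_schedule =
  fixes ta te :: "nat \<Rightarrow> nat \<Rightarrow> nat set \<Rightarrow> nat" and K :: nat and \<beta> :: "nat \<Rightarrow> real" and T :: nat
  assumes K_ge_2: "K \<ge> 2"
    and \<beta>_nonneg: "\<forall>n\<in>{2..K}. \<beta> n \<ge> 0" and \<beta>_sum: "(\<Sum>n\<in>{2..K}. \<beta> n) = 1"
    and ta_in: "\<forall>T t A. A \<noteq> {} \<longrightarrow> ta T t A \<in> A"
    and te_in: "\<forall>T t A. A \<noteq> {} \<longrightarrow> te T t A \<in> A"
begin

abbreviation \<tau> :: "nat \<Rightarrow> nat" where "\<tau> n \<equiv> elim_time K \<beta> T n"

lemma elim_time_antimono:
  assumes "2 \<le> m" "m \<le> m'" shows "\<tau> m' \<le> \<tau> m"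
proof -
  have "(\<Sum>k\<in>{m'..K}. \<beta> k) \<le> (\<Sum>k\<in>{m..K}. \<beta> k)"
    by (rule sum_mono2) (use assms \<beta>_nonneg in auto)
  then show ?thesis
    unfolding elim_time_def by (intro nat_mono floor_mono mult_right_mono) auto
qed

lemma elim_time_le: assumes "2 \<le> m" shows "\<tau> m \<le> T"
proof -
  have "(\<Sum>k\<in>{m..K}. \<beta> k) \<le> (\<Sum>k\<in>{2..K}. \<beta> k)"
    by (rule sum_mono2) (use assms \<beta>_nonneg in auto)
  then have "(\<Sum>k\<in>{m..K}. \<beta> k) * real T \<le> real T"
    using \<beta>_sum mult_right_mono[of _ 1 "real T"] by auto
  then show ?thesis
    unfolding elim_time_def by (metis floor_mono floor_of_nat nat_mono nat_int)
qed

lemma elim_time_less_imp_less: "2 \<le> m \<Longrightarrow> \<tau> m < \<tau> n \<Longrightarrow> n < m"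
  using elim_time_antimono[of m n] by (meson leD leI)

lemma elim_time_Suc_K: "\<tau> (Suc K) = 0"
  unfolding elim_time_def by simp

text \<open>Quantities of the run are computed for an arbitrary order p; the actual run follows
  an order that is a fixed point of the elimination rule (consistent_order).\<close>

definition survivors :: "(nat \<Rightarrow> nat) \<Rightarrow> nat \<Rightarrow> nat set" where
  "survivors p n = {..<K} - p ` {Suc n..K}"

definition cand :: "(nat \<Rightarrow> nat) \<Rightarrow> nat \<Rightarrow> nat set" where
  "cand p t = {..<K} - p ` {m\<in>{2..K}. \<tau> m \<le> t}"

definition least_pulled :: "nat set \<Rightarrow> (nat \<Rightarrow> nat) \<Rightarrow> nat set" where
  "least_pulled C N = {i\<in>C. \<forall>j\<in>C. N i \<le> N j}"

primrec pulls :: "(nat \<Rightarrow> nat) \<Rightarrow> nat \<Rightarrow> nat \<Rightarrow> nat" where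
  "pulls p 0 = (\<lambda>_. 0)"
| "pulls p (Suc t) =
     (let i = ta T (Suc t) (least_pulled (cand p t) (pulls p t)) in (pulls p t)(i := Suc (pulls p t i)))"

definition pulled :: "(nat \<Rightarrow> nat) \<Rightarrow> nat \<Rightarrow> nat" where
  "pulled p t = ta T (Suc t) (least_pulled (cand p t) (pulls p t))"

definition pull_times :: "(nat \<Rightarrow> nat) \<Rightarrow> nat \<Rightarrow> nat \<Rightarrow> nat set" where
  "pull_times p t i = {s. s < t \<and> pulled p s = i}"

definition obs_sum :: "(nat \<Rightarrow> nat) \<Rightarrow> (nat \<times> nat \<Rightarrow> real) \<Rightarrow> nat \<Rightarrow> nat \<Rightarrow> real" where
  "obs_sum p Y t i = (\<Sum>s\<in>pull_times p t i. Y (s, i))"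

definition lowest_mean :: "nat set \<Rightarrow> (nat \<Rightarrow> nat) \<Rightarrow> (nat \<Rightarrow> real) \<Rightarrow> nat set" where
  "lowest_mean C N S = {i\<in>C. \<forall>j\<in>C. emp_mean N S i \<le> emp_mean N S j}"

definition elim_choice :: "(nat \<Rightarrow> nat) \<Rightarrow> (nat \<times> nat \<Rightarrow> real) \<Rightarrow> nat \<Rightarrow> nat" where
  "elim_choice p Y n = te T (\<tau> n) (lowest_mean (survivors p n) (pulls p (\<tau> n)) (obs_sum p Y (\<tau> n)))"

lemma pulls_Suc: "pulls p (Suc t) = (pulls p t)(pulled p t := Suc (pulls p t (pulled p t)))"
  by (simp add: pulled_def Let_def)

declare pulls.simps(2) [simp del]

lemma pull_times_Suc:
  "pull_times p (Suc t) i = (if i = pulled p t then insert t (pull_times p t i) else pull_times p t i)"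
  unfolding pull_times_def by (auto simp: less_Suc_eq)

lemma finite_pull_times [simp]: "finite (pull_times p t i)"
  and not_in_pull_times [simp]: "t \<notin> pull_times p t i"
  by (auto simp: pull_times_def)

lemma card_pull_times: "card (pull_times p t i) = pulls p t i"
  by (induction t) (auto simp: pull_times_Suc pulls_Suc, simp add: pull_times_def)

lemma survivors_Suc: "n < K \<Longrightarrow> survivors p n = survivors p (Suc n) - {p (Suc n)}"
  unfolding survivors_def by (auto simp: atLeastAtMost_insertL[symmetric])

lemma cand_eq_survivors:
  assumes "1 \<le> m" "\<tau> (Suc m) \<le> u" "u < \<tau> m"
  shows "cand p u = survivors p m"
proof -
  have "{m'\<in>{2..K}. \<tau> m' \<le> u} = {Suc m..K}"
    using assms elim_time_less_imp_less[of _ m] elim_time_antimono[of "Suc m"]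
    by (fastforce simp: Suc_le_eq)
  then show ?thesis unfolding cand_def survivors_def by simp
qed

lemma cand_final: "cand p T = survivors p 1"
proof -
  have "{m\<in>{2..K}. \<tau> m \<le> T} = {Suc 1..K}" using elim_time_le by auto
  then show ?thesis unfolding cand_def survivors_def by simp
qed

lemma foldl_elim_one:
  assumes "sorted_wrt (>) ns"
    and "\<forall>n\<in>set ns. \<tau> n = t \<longrightarrow>
           te T t (lowest_mean (C - p ` {m\<in>set ns. n < m \<and> \<tau> m = t}) N S) = p n"
  shows "foldl (elim_one te K \<beta> T t) (C, N, S) ns = (C - p ` {m\<in>set ns. \<tau> m = t}, N, S)"
  using assms
proof (induction ns arbitrary: C)
  case Nil
  then show ?case by simp
next
  case (Cons x xs)
  let ?C' = "C - p ` {m\<in>{x}. \<tau> m = t}"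
  have none_later: "{m\<in>set (x # xs). x < m \<and> \<tau> m = t} = {}" using Cons.prems(1) by auto
  have "\<tau> x = t \<Longrightarrow> te T t (lowest_mean C N S) = p x"
    using bspec[OF Cons.prems(2), of x] unfolding none_later by simp
  then have step: "elim_one te K \<beta> T t (C, N, S) x = (?C', N, S)"
    by (auto simp: elim_one_def lowest_mean_def)
  have "foldl (elim_one te K \<beta> T t) (?C', N, S) xs = (?C' - p ` {m\<in>set xs. \<tau> m = t}, N, S)"
  proof (rule Cons.IH)
    show "sorted_wrt (>) xs" using Cons.prems(1) by simp
    have "?C' - p ` {m\<in>set xs. n < m \<and> \<tau> m = t} = C - p ` {m\<in>set (x # xs). n < m \<and> \<tau> m = t}"
      if "n \<in> set xs" for n
      using that Cons.prems(1) by auto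
    then show "\<forall>n\<in>set xs. \<tau> n = t \<longrightarrow>
        te T t (lowest_mean (?C' - p ` {m\<in>set xs. n < m \<and> \<tau> m = t}) N S) = p n"
      using Cons.prems(2) by auto
  qed
  moreover have "?C' - p ` {m\<in>set xs. \<tau> m = t} = C - p ` {m\<in>set (x # xs). \<tau> m = t}"
    by auto
  ultimately show ?case using step by simp
qed

definition consistent_order :: "(nat \<Rightarrow> nat) \<Rightarrow> (nat \<times> nat \<Rightarrow> real) \<Rightarrow> bool" where
  "consistent_order p Y \<longleftrightarrow> (\<forall>n\<in>{2..K}. p n = elim_choice p Y n)"

lemma earlier_stages:
  assumes n: "n \<in> {2..K}"
  shows "{m\<in>{2..K}. \<tau> m < \<tau> n \<or> (n < m \<and> \<tau> m = \<tau> n)} = {Suc n..K}"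
proof
  show "{m\<in>{2..K}. \<tau> m < \<tau> n \<or> (n < m \<and> \<tau> m = \<tau> n)} \<subseteq> {Suc n..K}"
    using elim_time_less_imp_less by (auto simp: Suc_le_eq)
  show "{Suc n..K} \<subseteq> {m\<in>{2..K}. \<tau> m < \<tau> n \<or> (n < m \<and> \<tau> m = \<tau> n)}"
  proof
    fix m assume m: "m \<in> {Suc n..K}"
    then have "\<tau> m \<le> \<tau> n" using n elim_time_antimono[of n m] by auto
    then show "m \<in> {m\<in>{2..K}. \<tau> m < \<tau> n \<or> (n < m \<and> \<tau> m = \<tau> n)}"
      using m n by auto
  qed
qed

lemma elim_all_eq:
  assumes "consistent_order p Y"
  shows "elim_all te K \<beta> T t ({..<K} - p ` {m\<in>{2..K}. \<tau> m < t}, pulls p t, obs_sum p Y t)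
       = (cand p t, pulls p t, obs_sum p Y t)"
proof -
  let ?C = "{..<K} - p ` {m\<in>{2..K}. \<tau> m < t}"
  let ?ns = "rev [2..<Suc K]"
  have set_ns: "set ?ns = {2..K}" by auto
  have "foldl (elim_one te K \<beta> T t) (?C, pulls p t, obs_sum p Y t) ?ns
      = (?C - p ` {m\<in>set ?ns. \<tau> m = t}, pulls p t, obs_sum p Y t)"
  proof (rule foldl_elim_one)
    show "sorted_wrt (>) ?ns" unfolding sorted_wrt_rev by (rule sorted_wrt_upt)
    have "?C - p ` {m\<in>set ?ns. n < m \<and> \<tau> m = t} = survivors p n"
      if "n \<in> {2..K}" "\<tau> n = t" for n
    proof -
      have "?C - p ` {m\<in>set ?ns. n < m \<and> \<tau> m = t}
          = {..<K} - p ` {m\<in>{2..K}. \<tau> m < \<tau> n \<or> (n < m \<and> \<tau> m = \<tau> n)}"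
        using that(2) unfolding set_ns by auto
      then show ?thesis unfolding earlier_stages[OF that(1)] survivors_def .
    qed
    then show "\<forall>n\<in>set ?ns. \<tau> n = t \<longrightarrow>
        te T t (lowest_mean (?C - p ` {m\<in>set ?ns. n < m \<and> \<tau> m = t}) (pulls p t) (obs_sum p Y t)) = p n"
      using assms unfolding set_ns consistent_order_def elim_choice_def by auto
  qed
  moreover have "?C - p ` {m\<in>set ?ns. \<tau> m = t} = cand p t"
    unfolding cand_def set_ns by (auto simp: le_less)
  ultimately show ?thesis unfolding elim_all_def by simp
qed

lemma assign_step_eq:
  "assign_step ta T t Y (cand p t, pulls p t, obs_sum p Y t)
     = (cand p t, pulls p (Suc t), obs_sum p Y (Suc t))"
proof -
  have "obs_sum p Y (Suc t) = (obs_sum p Y t)(pulled p t := obs_sum p Y t (pulled p t) + Y (t, pulled p t))"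
    by (rule ext) (simp add: obs_sum_def pull_times_Suc)
  then show ?thesis
    unfolding assign_step_def pulls_Suc by (simp add: Let_def pulled_def least_pulled_def)
qed

lemma bae_run_eq:
  assumes "consistent_order p Y"
  shows "bae_run ta te K \<beta> T Y t = (cand p t, pulls p t, obs_sum p Y t)"
proof (induction t)
  case 0
  have "obs_sum p Y 0 = (\<lambda>_. 0)" by (auto simp: obs_sum_def pull_times_def)
  then show ?case using elim_all_eq[OF assms, of 0] by simp
next
  case (Suc t)
  have "cand p t = {..<K} - p ` {m\<in>{2..K}. \<tau> m < Suc t}"
    unfolding cand_def by (simp add: less_Suc_eq_le)
  then show ?case
    using elim_all_eq[OF assms, of "Suc t"] Suc assign_step_eq[of t Y p] by simp
qed

lemma pulls_cong: "(\<forall>s<t0. cand p s = cand p' s) \<Longrightarrow> t \<le> t0 \<Longrightarrow> pulls p t = pulls p' t"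
  by (induction t) (auto simp: pulls_Suc pulled_def)

lemma pulled_cong: "(\<forall>s<t0. cand p s = cand p' s) \<Longrightarrow> s < t0 \<Longrightarrow> pulled p s = pulled p' s"
  unfolding pulled_def using pulls_cong[of t0 p p' s] by auto

lemma obs_sum_cong: "(\<forall>s<t0. cand p s = cand p' s) \<Longrightarrow> t \<le> t0 \<Longrightarrow> obs_sum p Y t = obs_sum p' Y t"
  using pulled_cong[of t0 p p'] unfolding obs_sum_def pull_times_def
  by (intro ext sum.cong) auto

lemma elim_choice_cong:
  assumes n: "n \<in> {2..K}" and agree: "\<forall>m\<in>{Suc n..K}. p m = p' m"
  shows "elim_choice p Y n = elim_choice p' Y n"
proof -
  have "{m\<in>{2..K}. \<tau> m \<le> s} \<subseteq> {Suc n..K}" if "s < \<tau> n" for s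
    using that elim_time_less_imp_less[of _ n] by (auto simp: Suc_le_eq)
  then have cand: "\<forall>s<\<tau> n. cand p s = cand p' s"
    using agree unfolding cand_def by (metis (no_types, lifting) image_cong subsetD)
  have "survivors p n = survivors p' n"
    using agree unfolding survivors_def by (metis image_cong)
  then show ?thesis
    unfolding elim_choice_def pulls_cong[OF cand le_refl] obs_sum_cong[OF cand le_refl] by simp
qed

text \<open>The fixed point is built from the first elimination (n = K) on: order_prefix Y k fixes
  the choices at n = K, ..., K - k + 1, each of which only depends on the earlier ones.\<close>

primrec order_prefix :: "(nat \<times> nat \<Rightarrow> real) \<Rightarrow> nat \<Rightarrow> nat \<Rightarrow> nat" where
  "order_prefix Y 0 = (\<lambda>_. 0)"
| "order_prefix Y (Suc k) = (order_prefix Y k)(K - k := elim_choice (order_prefix Y k) Y (K - k))"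

definition run_order :: "(nat \<times> nat \<Rightarrow> real) \<Rightarrow> nat \<Rightarrow> nat" where
  "run_order Y = restrict (order_prefix Y (K - 1)) {2..K}"

lemma order_prefix_consistent:
  "k \<le> K - 1 \<Longrightarrow> \<forall>n\<in>{K - k + 1..K}. order_prefix Y k n = elim_choice (order_prefix Y k) Y n"
proof (induction k)
  case 0
  then show ?case by auto
next
  case (Suc k)
  show ?case
  proof
    fix n assume n: "n \<in> {K - Suc k + 1..K}"
    have "elim_choice (order_prefix Y (Suc k)) Y n = elim_choice (order_prefix Y k) Y n"
      using n Suc.prems by (intro elim_choice_cong) auto
    then show "order_prefix Y (Suc k) n = elim_choice (order_prefix Y (Suc k)) Y n"
      using Suc n by (cases "n = K - k") auto
  qed
qed

lemma consistent_run_order: "consistent_order (run_order Y) Y"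
  unfolding consistent_order_def
proof
  fix n assume n: "n \<in> {2..K}"
  have "order_prefix Y (K - 1) n = elim_choice (order_prefix Y (K - 1)) Y n"
    using order_prefix_consistent[of "K - 1" Y] n K_ge_2 by auto
  moreover have "elim_choice (order_prefix Y (K - 1)) Y n = elim_choice (run_order Y) Y n"
    using n by (intro elim_choice_cong) (auto simp: run_order_def)
  ultimately show "run_order Y n = elim_choice (run_order Y) Y n" using n by (simp add: run_order_def)
qed

definition elim_order :: "(nat \<Rightarrow> nat) \<Rightarrow> bool" where
  "elim_order p \<longleftrightarrow> (\<forall>n\<in>{2..K}. card (survivors p n) = n \<and> p n \<in> survivors p n)"

lemma elim_choice_lowest_mean:
  assumes "survivors p n \<noteq> {}"
  shows "elim_choice p Y n \<in> lowest_mean (survivors p n) (pulls p (\<tau> n)) (obs_sum p Y (\<tau> n))"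
proof -
  have "lowest_mean (survivors p n) (pulls p (\<tau> n)) (obs_sum p Y (\<tau> n)) \<noteq> {}"
    unfolding lowest_mean_def by (rule minimizers_nonempty) (use assms in \<open>auto simp: survivors_def\<close>)
  then show ?thesis unfolding elim_choice_def using te_in by blast
qed

lemma consistent_imp_elim_order:
  assumes "consistent_order p Y" shows "elim_order p"
  unfolding elim_order_def
proof
  fix n assume n: "n \<in> {2..K}"
  have survivor: "p m \<in> survivors p m" if "m \<in> {2..K}" "survivors p m \<noteq> {}" for m
    using elim_choice_lowest_mean[OF that(2), of Y] assms that(1)
    unfolding consistent_order_def lowest_mean_def by auto
  from n have "n \<le> K" by simp
  then show "card (survivors p n) = n \<and> p n \<in> survivors p n"
  proof (induction n rule: inc_induct)
    case base
    have "survivors p K = {..<K}" unfolding survivors_def by auto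
    then show ?case using survivor[of K] K_ge_2 by (auto simp: lessThan_empty_iff)
  next
    case (step m)
    have "survivors p m = survivors p (Suc m) - {p (Suc m)}" using step.hyps(2) by (rule survivors_Suc)
    then have card: "card (survivors p m) = m"
      using step.IH by (simp add: survivors_def)
    then have "survivors p m \<noteq> {}" using step.hyps n by auto
    then show ?case using survivor[of m] step.hyps n card by simp
  qed
qed

lemma elim_order_final: assumes "elim_order p" shows "\<exists>i. cand p T = {i}"
proof -
  have "cand p T = survivors p 2 - {p 2}"
    using K_ge_2 survivors_Suc[of 1 p] cand_final by (simp add: numeral_2_eq_2)
  moreover have "card (survivors p 2) = 2" "p 2 \<in> survivors p 2"
    using assms K_ge_2 unfolding elim_order_def by auto
  ultimately have "card (cand p T) = 1" by (simp add: survivors_def)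
  then show ?thesis by (simp add: card_1_singleton_iff)
qed

section \<open>Round robin pull counts\<close>

lemma finite_cand: "finite (cand p t)"
  unfolding cand_def by auto

lemma cand_nonempty: "cand p t \<noteq> {}"
proof
  assume "cand p t = {}"
  then have "{..<K} \<subseteq> p ` {2..K}" unfolding cand_def by auto
  then have "card {..<K} \<le> card (p ` {2..K})" by (intro card_mono) auto
  also have "\<dots> \<le> card {2..K}" by (rule card_image_le) auto
  finally show False using K_ge_2 by simp
qed

lemma pulled_least_pulled: "pulled p t \<in> least_pulled (cand p t) (pulls p t)"
  unfolding pulled_def least_pulled_def
  by (rule ta_in[rule_format, OF minimizers_nonempty[OF finite_cand cand_nonempty]])

lemma pulled_in_cand: "pulled p t \<in> cand p t"
  using pulled_least_pulled unfolding least_pulled_def by auto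

lemma pulls_pulled_le: "j \<in> cand p t \<Longrightarrow> pulls p t (pulled p t) \<le> pulls p t j"
  using pulled_least_pulled unfolding least_pulled_def by auto

lemma cand_antimono: "u \<le> v \<Longrightarrow> cand p v \<subseteq> cand p u"
  unfolding cand_def by auto

lemma pulls_balanced:
  "i \<in> cand p t \<Longrightarrow> j \<in> cand p t \<Longrightarrow> pulls p (Suc t) i \<le> Suc (pulls p (Suc t) j)"
proof (induction t arbitrary: i j)
  case 0
  then show ?case by (simp add: pulls_Suc)
next
  case (Suc t)
  have "i \<in> cand p t" "j \<in> cand p t" using Suc.prems cand_antimono[of t "Suc t" p] by auto
  then have "pulls p (Suc t) i \<le> Suc (pulls p (Suc t) j)" by (rule Suc.IH)
  moreover have "pulls p (Suc t) (pulled p (Suc t)) \<le> pulls p (Suc t) j"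
    using Suc.prems(2) by (rule pulls_pulled_le)
  ultimately show ?case by (auto simp: pulls_Suc[of p "Suc t"])
qed

lemma sum_pulls_phase:
  assumes "a \<le> b" "\<forall>u. a \<le> u \<and> u < b \<longrightarrow> cand p u = C"
  shows "(\<Sum>i\<in>C. pulls p b i) = (\<Sum>i\<in>C. pulls p a i) + (b - a)"
  using assms
proof (induction b rule: dec_induct)
  case base
  then show ?case by simp
next
  case (step n)
  have C: "cand p n = C" using step by auto
  have "(\<Sum>i\<in>C. pulls p (Suc n) i) = (\<Sum>i\<in>C. pulls p n i + (if i = pulled p n then 1 else 0))"
    by (intro sum.cong) (auto simp: pulls_Suc)
  also have "\<dots> = (\<Sum>i\<in>C. pulls p n i) + 1"
    using finite_cand[of p n] pulled_in_cand[of p n] unfolding C by (simp add: sum.distrib)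
  finally show ?case using step by simp
qed

text \<open>While the candidate set stays equal to C, round robin spreads the b - a units
  over C evenly up to one unit.\<close>

lemma pulls_phase:
  assumes ab: "a \<le> b" and C: "\<forall>u. a \<le> u \<and> u < b \<longrightarrow> cand p u = C"
    and L: "\<forall>j\<in>C. L \<le> real (pulls p a j)" and i: "i \<in> C"
  shows "L + (real b - real a) / real (card C) - 1 \<le> real (pulls p b i)"
proof (cases "a = b")
  case True
  then show ?thesis using L i by fastforce
next
  case False
  then have C_last: "cand p (b - 1) = C" and b: "Suc (b - 1) = b" using ab C by auto
  have m: "real (card C) > 0" using C_last finite_cand cand_nonempty by (metis card_gt_0_iff of_nat_0_less_iff)
  have "real (card C) * L + (real b - real a) \<le> (\<Sum>j\<in>C. real (pulls p a j)) + (real b - real a)"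
    using L sum_mono[of C "\<lambda>_. L"] by auto
  also have "\<dots> = (\<Sum>j\<in>C. real (pulls p b j))"
    using sum_pulls_phase[OF ab C] ab by (simp add: of_nat_diff flip: of_nat_sum)
  also have "\<dots> \<le> (\<Sum>j\<in>C. real (pulls p b i) + 1)"
  proof (rule sum_mono)
    fix j assume "j \<in> C"
    then have "pulls p b j \<le> Suc (pulls p b i)"
      using pulls_balanced[of j p "b - 1" i] i unfolding C_last b by blast
    then show "real (pulls p b j) \<le> real (pulls p b i) + 1" by linarith
  qed
  also have "\<dots> = real (card C) * (real (pulls p b i) + 1)" by simp
  finally show ?thesis using m by (simp add: field_simps)
qed

lemma elim_time_gap:
  assumes m: "m \<in> {2..K}" shows "\<beta> m * real T - 1 \<le> real (\<tau> m) - real (\<tau> (Suc m))"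
proof -
  define x where "x = (\<Sum>k\<in>{Suc m..K}. \<beta> k) * real T"
  have "(\<Sum>k\<in>{Suc m..K}. \<beta> k) \<ge> 0" using \<beta>_nonneg m by (intro sum_nonneg) auto
  then have "x \<ge> 0" "\<beta> m * real T \<ge> 0" using \<beta>_nonneg m unfolding x_def by auto
  moreover have "real (\<tau> m) = real_of_int \<lfloor>\<beta> m * real T + x\<rfloor>" "real (\<tau> (Suc m)) = real_of_int \<lfloor>x\<rfloor>"
    using m calculation unfolding elim_time_def x_def
    by (simp_all add: sum.atLeast_Suc_atMost distrib_right)
  moreover have "\<beta> m * real T + x - 1 < real_of_int \<lfloor>\<beta> m * real T + x\<rfloor>" "real_of_int \<lfloor>x\<rfloor> \<le> x"
    by (rule real_of_int_floor_gt_diff_one, rule of_int_floor_le)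
  ultimately show ?thesis by linarith
qed

text \<open>By time \<tau> n every survivor has been pulled about T w_n times: between \<tau> (m+1)
  and \<tau> m the m survivors share \<beta> m T units.\<close>

lemma pulls_lower_bound:
  assumes p: "elim_order p" and n: "n \<in> {2..K}" and j: "j \<in> survivors p n"
  shows "real T * wgt K \<beta> n - 2 * (real K + 1 - real n) \<le> real (pulls p (\<tau> n) j)"
proof -
  have "n \<le> Suc K" using n by simp
  then have "\<forall>j\<in>survivors p n. real T * wgt K \<beta> n - 2 * (real K + 1 - real n) \<le> real (pulls p (\<tau> n) j)"
  proof (induction n rule: inc_induct)
    case base
    show ?case by (simp add: wgt_def elim_time_Suc_K)
  next
    case (step m)
    have m: "m \<in> {2..K}" using step.hyps n by auto
    show ?case
    proof
      fix j assume j: "j \<in> survivors p m"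
      define L where "L = real T * wgt K \<beta> (Suc m) - 2 * (real K - real m)"
      have "\<tau> (Suc m) \<le> \<tau> m" using m by (intro elim_time_antimono) auto
      moreover have "\<forall>u. \<tau> (Suc m) \<le> u \<and> u < \<tau> m \<longrightarrow> cand p u = survivors p m"
        using m cand_eq_survivors[of m _ p] by auto
      moreover have "\<forall>j\<in>survivors p m. L \<le> real (pulls p (\<tau> (Suc m)) j)"
        using step.IH unfolding L_def survivors_def by auto
      moreover have "card (survivors p m) = m" using p m unfolding elim_order_def by auto
      ultimately have "L + (real (\<tau> m) - real (\<tau> (Suc m))) / real m - 1 \<le> real (pulls p (\<tau> m) j)"
        using pulls_phase[OF _ _ _ j] by metis
      moreover have "(\<beta> m * real T - 1) / real m \<le> (real (\<tau> m) - real (\<tau> (Suc m))) / real m"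
        using elim_time_gap[OF m] m by (intro divide_right_mono) auto
      moreover have "\<beta> m * real T / real m - 1 \<le> (\<beta> m * real T - 1) / real m"
        using m by (simp add: diff_divide_distrib)
      moreover have "real T * wgt K \<beta> m = \<beta> m * real T / real m + real T * wgt K \<beta> (Suc m)"
        using m by (simp add: wgt_unfold algebra_simps)
      ultimately show "real T * wgt K \<beta> m - 2 * (real K + 1 - real m) \<le> real (pulls p (\<tau> m) j)"
        unfolding L_def by (smt (verit))
    qed
  qed
  then show ?thesis using j by blast
qed

definition orders :: "(nat \<Rightarrow> nat) set" where
  "orders = {2..K} \<rightarrow>\<^sub>E {..<K}"

lemma finite_orders: "finite orders"
  unfolding orders_def by (rule finite_PiE) auto

lemma card_orders: "card orders = K ^ (K - 1)"
  unfolding orders_def by (simp add: card_PiE)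

lemma run_order_in_orders: "run_order Y \<in> orders"
proof -
  have "run_order Y n \<in> survivors (run_order Y) n" if "n \<in> {2..K}" for n
    using consistent_imp_elim_order[OF consistent_run_order] that unfolding elim_order_def by blast
  then show ?thesis unfolding orders_def by (auto simp: run_order_def survivors_def)
qed

lemma pull_times_subset: "t \<le> T \<Longrightarrow> pull_times p t i \<subseteq> {..<T}"
  unfolding pull_times_def by auto

end

section \<open>A Chernoff bound for Gaussian empirical means\<close>

lemma normal_density_mult_exp:
  assumes "\<sigma> > 0"
  shows "normal_density \<mu> \<sigma> y * exp (a * y)
       = exp (a * \<mu> + a\<^sup>2 * \<sigma>\<^sup>2 / 2) * normal_density (\<mu> + a * \<sigma>\<^sup>2) \<sigma> y"
proof -
  have "-(y - \<mu>)\<^sup>2 / (2 * \<sigma>\<^sup>2) + a * y = (a * \<mu> + a\<^sup>2 * \<sigma>\<^sup>2 / 2) + (-(y - (\<mu> + a * \<sigma>\<^sup>2))\<^sup>2 / (2 * \<sigma>\<^sup>2))"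
    using assms by (simp add: field_simps power2_eq_square)
  then have "exp (-(y - \<mu>)\<^sup>2 / (2 * \<sigma>\<^sup>2)) * exp (a * y)
      = exp (a * \<mu> + a\<^sup>2 * \<sigma>\<^sup>2 / 2) * exp (-(y - (\<mu> + a * \<sigma>\<^sup>2))\<^sup>2 / (2 * \<sigma>\<^sup>2))"
    by (simp add: exp_add[symmetric])
  then show ?thesis unfolding normal_density_def by (simp add: algebra_simps)
qed

lemma
  assumes "\<sigma> > 0"
  shows integrable_normal_exp: "integrable (density lborel (normal_density \<mu> \<sigma>)) (\<lambda>y. exp (a * y))"
    and integral_normal_exp:
      "(\<integral>y. exp (a * y) \<partial>density lborel (normal_density \<mu> \<sigma>)) = exp (a * \<mu> + a\<^sup>2 * \<sigma>\<^sup>2 / 2)"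
proof -
  have eq: "(\<lambda>y. normal_density \<mu> \<sigma> y * exp (a * y))
      = (\<lambda>y. exp (a * \<mu> + a\<^sup>2 * \<sigma>\<^sup>2 / 2) * normal_density (\<mu> + a * \<sigma>\<^sup>2) \<sigma> y)"
    using normal_density_mult_exp[OF assms] by auto
  show "integrable (density lborel (normal_density \<mu> \<sigma>)) (\<lambda>y. exp (a * y))"
    using assms by (subst integrable_density) (auto simp: eq intro!: integrable_normal_density)
  have "(\<integral>y. exp (a * y) \<partial>density lborel (normal_density \<mu> \<sigma>))
      = (\<integral>y. normal_density \<mu> \<sigma> y * exp (a * y) \<partial>lborel)"
    by (subst integral_density) auto
  also have "\<dots> = exp (a * \<mu> + a\<^sup>2 * \<sigma>\<^sup>2 / 2)" unfolding eq using integral_normal_density[OF assms] by simp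
  finally show "(\<integral>y. exp (a * y) \<partial>density lborel (normal_density \<mu> \<sigma>)) = exp (a * \<mu> + a\<^sup>2 * \<sigma>\<^sup>2 / 2)" .
qed

definition outcome_law :: "real \<Rightarrow> (nat \<Rightarrow> real) \<Rightarrow> nat \<times> nat \<Rightarrow> real measure" where
  "outcome_law \<sigma> \<theta> x = density lborel (normal_density (\<theta> (snd x)) \<sigma>)"

lemma outcome_measure_eq_PiM: "outcome_measure K \<sigma> \<theta> T = PiM ({..<T} \<times> {..<K}) (outcome_law \<sigma> \<theta>)"
  unfolding outcome_measure_def outcome_law_def by (simp add: case_prod_beta')

lemma sets_outcome_law [simp]: "sets (outcome_law \<sigma> \<theta> x) = sets borel"
  unfolding outcome_law_def by simp

lemma prob_space_outcome_law: "\<sigma> > 0 \<Longrightarrow> prob_space (outcome_law \<sigma> \<theta> x)"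
  unfolding outcome_law_def by (rule prob_space_normal_density)

lemma product_sigma_finite_outcome_law: "\<sigma> > 0 \<Longrightarrow> product_sigma_finite (outcome_law \<sigma> \<theta>)"
  unfolding product_sigma_finite_def using prob_space_outcome_law prob_space_imp_sigma_finite by blast

lemma prob_space_outcome_measure: "\<sigma> > 0 \<Longrightarrow> prob_space (outcome_measure K \<sigma> \<theta> T)"
  unfolding outcome_measure_eq_PiM by (rule prob_space_PiM) (rule prob_space_outcome_law)

lemma measurable_outcome:
  assumes "x \<in> {..<T} \<times> {..<K}"
  shows "(\<lambda>Y. Y x) \<in> borel_measurable (outcome_measure K \<sigma> \<theta> T)"
  using measurable_component_singleton[OF assms, of "outcome_law \<sigma> \<theta>"]
    measurable_cong_sets[OF refl sets_outcome_law]
  unfolding outcome_measure_eq_PiM by blast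

lemma
  assumes "\<sigma> > 0"
  shows integrable_outcome_exp:
      "integrable (outcome_measure K \<sigma> \<theta> T) (\<lambda>Y. exp (\<Sum>x\<in>{..<T} \<times> {..<K}. \<alpha> x * Y x))"
    and integral_outcome_exp:
      "(\<integral>Y. exp (\<Sum>x\<in>{..<T} \<times> {..<K}. \<alpha> x * Y x) \<partial>outcome_measure K \<sigma> \<theta> T)
       = exp (\<Sum>x\<in>{..<T} \<times> {..<K}. \<alpha> x * \<theta> (snd x) + (\<alpha> x)\<^sup>2 * \<sigma>\<^sup>2 / 2)"
proof -
  let ?I = "{..<T} \<times> {..<K}"
  interpret product_sigma_finite "outcome_law \<sigma> \<theta>"
    by (rule product_sigma_finite_outcome_law[OF assms])
  have prod: "(\<lambda>Y. exp (\<Sum>x\<in>?I. \<alpha> x * Y x)) = (\<lambda>Y. \<Prod>x\<in>?I. exp (\<alpha> x * Y x))"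
    by (simp add: exp_sum)
  have int: "integrable (outcome_law \<sigma> \<theta> x) (\<lambda>y. exp (\<alpha> x * y))" for x
    unfolding outcome_law_def by (rule integrable_normal_exp[OF assms])
  show "integrable (outcome_measure K \<sigma> \<theta> T) (\<lambda>Y. exp (\<Sum>x\<in>?I. \<alpha> x * Y x))"
    unfolding outcome_measure_eq_PiM prod by (rule product_integrable_prod) (auto intro: int)
  have "(\<integral>Y. exp (\<Sum>x\<in>?I. \<alpha> x * Y x) \<partial>outcome_measure K \<sigma> \<theta> T)
      = (\<Prod>x\<in>?I. (\<integral>y. exp (\<alpha> x * y) \<partial>outcome_law \<sigma> \<theta> x))"
    unfolding outcome_measure_eq_PiM prod by (rule product_integral_prod) (auto intro: int)
  also have "\<dots> = exp (\<Sum>x\<in>?I. \<alpha> x * \<theta> (snd x) + (\<alpha> x)\<^sup>2 * \<sigma>\<^sup>2 / 2)"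
    unfolding outcome_law_def integral_normal_exp[OF assms] by (simp add: exp_sum)
  finally show "(\<integral>Y. exp (\<Sum>x\<in>?I. \<alpha> x * Y x) \<partial>outcome_measure K \<sigma> \<theta> T)
       = exp (\<Sum>x\<in>?I. \<alpha> x * \<theta> (snd x) + (\<alpha> x)\<^sup>2 * \<sigma>\<^sup>2 / 2)" .
qed

lemma sum_restrict_pairs:
  fixes T K :: nat and g :: "nat \<Rightarrow> nat \<Rightarrow> real"
  assumes "\<forall>i\<in>J. A i \<subseteq> {..<T}" "J \<subseteq> {..<K}"
  shows "(\<Sum>x\<in>{..<T} \<times> {..<K}. if snd x \<in> J \<and> fst x \<in> A (snd x) then g (snd x) (fst x) else 0)
       = (\<Sum>i\<in>J. \<Sum>s\<in>A i. g i s)"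
proof -
  have fin: "finite J" "\<forall>i\<in>J. finite (A i)"
    using assms by (auto intro: finite_subset)
  have "{x\<in>{..<T} \<times> {..<K}. snd x \<in> J \<and> fst x \<in> A (snd x)} = prod.swap ` Sigma J A"
    using assms by force
  then have "(\<Sum>x\<in>{..<T} \<times> {..<K}. if snd x \<in> J \<and> fst x \<in> A (snd x) then g (snd x) (fst x) else 0)
      = (\<Sum>x\<in>prod.swap ` Sigma J A. g (snd x) (fst x))"
    by (simp add: sum.inter_filter[symmetric])
  also have "\<dots> = (\<Sum>x\<in>Sigma J A. g (fst x) (snd x))"
    by (subst sum.reindex) auto
  also have "\<dots> = (\<Sum>i\<in>J. \<Sum>s\<in>A i. g i s)"
    using sum.Sigma[OF fin, of g] by (simp add: case_prod_beta')
  finally show ?thesis .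
qed

lemma measurable_emp_mean_outcome:
  assumes "i < K" "A i \<subseteq> {..<T}"
  shows "(\<lambda>Y. emp_mean N (\<lambda>i. \<Sum>s\<in>A i. Y (s, i)) i) \<in> borel_measurable (outcome_measure K \<sigma> \<theta> T)"
proof -
  have "(\<lambda>Y. \<Sum>s\<in>A i. Y (s, i)) \<in> borel_measurable (outcome_measure K \<sigma> \<theta> T)"
    using assms by (intro borel_measurable_sum measurable_outcome) auto
  then show ?thesis unfolding emp_mean_def by simp
qed

lemma (in prob_space) prob_le_expectation_exp:
  assumes "B \<in> events" "integrable M (\<lambda>x. exp (Z x))" "\<forall>x\<in>B. 0 \<le> Z x"
  shows "prob B \<le> expectation (\<lambda>x. exp (Z x))"
proof -
  have "prob B = expectation (indicator B)" using assms(1) by simp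
  also have "\<dots> \<le> expectation (\<lambda>x. exp (Z x))"
  proof (rule integral_mono)
    show "integrable M (indicator B :: _ \<Rightarrow> real)"
      using assms(1) by (intro integrable_real_indicator) (auto simp: less_top[symmetric])
    show "indicator B x \<le> exp (Z x)" for x
      using assms(3) by (cases "x \<in> B") auto
  qed (use assms(2) in auto)
  finally show ?thesis .
qed

lemma prob_outcome_le_exp:
  assumes "\<sigma> > 0" "B \<in> sets (outcome_measure K \<sigma> \<theta> T)"
    and "\<forall>Y\<in>B. 0 \<le> (\<Sum>z\<in>{..<T} \<times> {..<K}. \<alpha> z * Y z)"
  shows "measure (outcome_measure K \<sigma> \<theta> T) B
     \<le> exp (\<Sum>z\<in>{..<T} \<times> {..<K}. \<alpha> z * \<theta> (snd z) + (\<alpha> z)\<^sup>2 * \<sigma>\<^sup>2 / 2)"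
proof -
  interpret prob_space "outcome_measure K \<sigma> \<theta> T" by (rule prob_space_outcome_measure[OF assms(1)])
  have "prob B \<le> expectation (\<lambda>Y. exp (\<Sum>z\<in>{..<T} \<times> {..<K}. \<alpha> z * Y z))"
    by (rule prob_le_expectation_exp[OF assms(2) integrable_outcome_exp[OF assms(1)] assms(3)])
  also have "\<dots> = exp (\<Sum>z\<in>{..<T} \<times> {..<K}. \<alpha> z * \<theta> (snd z) + (\<alpha> z)\<^sup>2 * \<sigma>\<^sup>2 / 2)"
    by (rule integral_outcome_exp[OF assms(1)])
  finally show ?thesis .
qed

lemma zero_le_sum_mult_of_sum_zero:
  fixes x m :: "'a \<Rightarrow> real"
  assumes "finite J" "b \<in> J" "(\<Sum>i\<in>J. x i) = 0" "\<forall>i\<in>J - {b}. 0 \<le> x i" "\<forall>i\<in>J. m b \<le> m i"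
  shows "0 \<le> (\<Sum>i\<in>J. x i * m i)"
proof -
  have "0 \<le> (\<Sum>i\<in>J. x i * (m i - m b))"
    using assms(4,5) by (intro sum_nonneg) (metis Diff_iff diff_ge_0_iff_ge diff_self mult_nonneg_nonneg mult_zero_right singletonD)
  also have "\<dots> = (\<Sum>i\<in>J. x i * m i)"
    using assms(3) by (simp add: right_diff_distrib sum_subtractf sum_distrib_right[symmetric])
  finally show ?thesis .
qed

lemma ex_hinge_level:
  fixes \<theta> :: "'a \<Rightarrow> real"
  assumes "finite J"
  shows "\<exists>c. c + (\<Sum>i\<in>J. max (c - \<theta> i) 0) = y"
proof -
  define D where "D = (\<Sum>i\<in>J. \<bar>y - \<theta> i\<bar>)"
  define f where "f = (\<lambda>c. c + (\<Sum>i\<in>J. max (c - \<theta> i) 0))"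
  have "\<bar>y - \<theta> i\<bar> \<le> D" if "i \<in> J" for i
    unfolding D_def using assms that by (intro member_le_sum) auto
  then have "\<forall>i\<in>J. max (y - D - \<theta> i) 0 = 0" by force
  then have "f (y - D) = y - D" unfolding f_def by simp
  moreover have "D \<ge> 0" unfolding D_def by (intro sum_nonneg) auto
  moreover have "y \<le> f y" unfolding f_def by (simp add: sum_nonneg)
  moreover have "continuous_on {y - D..y} f" unfolding f_def by (intro continuous_intros)
  ultimately obtain c where "f c = y" using IVT'[of f "y - D" y y] by auto
  then show ?thesis unfolding f_def by auto
qed

lemma tilt_term_le:
  fixes N \<nu> \<sigma> x t :: real
  assumes "0 < \<nu>" "\<nu> \<le> N" "0 < \<sigma>"
  shows "N * ((\<nu> / \<sigma>\<^sup>2 * x / N) * t + (\<nu> / \<sigma>\<^sup>2 * x / N)\<^sup>2 * \<sigma>\<^sup>2 / 2)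
     \<le> \<nu> / \<sigma>\<^sup>2 * (x * t) + \<nu> / (2 * \<sigma>\<^sup>2) * x\<^sup>2"
proof -
  have N: "N > 0" "\<nu> / N \<le> 1" using assms by auto
  have "N * ((\<nu> / \<sigma>\<^sup>2 * x / N) * t + (\<nu> / \<sigma>\<^sup>2 * x / N)\<^sup>2 * \<sigma>\<^sup>2 / 2)
      = \<nu> / \<sigma>\<^sup>2 * (x * t) + \<nu> / N * (\<nu> / (2 * \<sigma>\<^sup>2) * x\<^sup>2)"
    using N assms(3) by (simp add: field_simps power2_eq_square)
  also have "\<dots> \<le> \<nu> / \<sigma>\<^sup>2 * (x * t) + \<nu> / (2 * \<sigma>\<^sup>2) * x\<^sup>2"
    using N assms(1) by (intro add_left_mono mult_left_le_one_le) auto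
  finally show ?thesis .
qed

text \<open>For the level c of ex_hinge_level the tilt weights x sum to zero, and the exponent
  is the cost of the alternative \<lambda>_b = c, \<lambda>_i = max \<theta>_i c, which is feasible for \<Gamma>.\<close>

lemma tilted_exponent_le:
  fixes \<theta> N x :: "nat \<Rightarrow> real"
  assumes J: "finite J" "b \<in> J" and \<sigma>: "\<sigma> > 0" and \<nu>: "\<nu> > 0" "\<forall>i\<in>J. \<nu> \<le> N i"
    and level: "c + (\<Sum>i\<in>J - {b}. max (c - \<theta> i) 0) = \<theta> b"
    and x: "x = (\<lambda>i. if i = b then - (\<Sum>j\<in>J - {b}. max (c - \<theta> j) 0) else max (c - \<theta> i) 0)"
  shows "(\<Sum>i\<in>J. N i * ((\<nu> / \<sigma>\<^sup>2 * x i / N i) * \<theta> i + (\<nu> / \<sigma>\<^sup>2 * x i / N i)\<^sup>2 * \<sigma>\<^sup>2 / 2))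
     \<le> - \<nu> / (2 * \<sigma>\<^sup>2) * ((\<theta> b - c)\<^sup>2 + (\<Sum>i\<in>J - {b}. (max (c - \<theta> i) 0)\<^sup>2))"
    (is "?lhs \<le> - \<nu> / (2 * \<sigma>\<^sup>2) * ?Q")
proof -
  define h where "h i = max (c - \<theta> i) 0" for i
  have x_b: "x b = - (\<theta> b - c)" using level x unfolding h_def by simp
  have x_i: "x i = h i" if "i \<in> J - {b}" for i using that x unfolding h_def by simp
  have "N i * ((\<nu> / \<sigma>\<^sup>2 * x i / N i) * \<theta> i + (\<nu> / \<sigma>\<^sup>2 * x i / N i)\<^sup>2 * \<sigma>\<^sup>2 / 2)
      \<le> \<nu> / \<sigma>\<^sup>2 * (x i * \<theta> i) + \<nu> / (2 * \<sigma>\<^sup>2) * (x i)\<^sup>2" if "i \<in> J" for i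
    using that \<sigma> \<nu> by (intro tilt_term_le) auto
  then have "?lhs \<le> (\<Sum>i\<in>J. \<nu> / \<sigma>\<^sup>2 * (x i * \<theta> i) + \<nu> / (2 * \<sigma>\<^sup>2) * (x i)\<^sup>2)"
    by (rule sum_mono)
  also have "\<dots> = \<nu> / \<sigma>\<^sup>2 * (\<Sum>i\<in>J. x i * \<theta> i) + \<nu> / (2 * \<sigma>\<^sup>2) * (\<Sum>i\<in>J. (x i)\<^sup>2)"
    by (simp add: sum.distrib sum_distrib_left)
  also have "(\<Sum>i\<in>J. x i * \<theta> i) = - ?Q"
  proof -
    have "h i * \<theta> i = c * h i - (h i)\<^sup>2" for i
      unfolding h_def by (auto simp: max_def power2_eq_square algebra_simps)
    then have "(\<Sum>i\<in>J - {b}. x i * \<theta> i) = (\<Sum>i\<in>J - {b}. c * h i - (h i)\<^sup>2)"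
      using x_i by (intro sum.cong) auto
    also have "\<dots> = c * (\<theta> b - c) - (\<Sum>i\<in>J - {b}. (h i)\<^sup>2)"
      using level unfolding h_def by (simp add: sum_subtractf sum_distrib_left[symmetric])
    finally have "(\<Sum>i\<in>J - {b}. x i * \<theta> i) = c * (\<theta> b - c) - (\<Sum>i\<in>J - {b}. (h i)\<^sup>2)" .
    moreover have "(\<Sum>i\<in>J. x i * \<theta> i) = x b * \<theta> b + (\<Sum>i\<in>J - {b}. x i * \<theta> i)"
      using J by (simp add: sum.remove)
    ultimately show ?thesis unfolding x_b h_def by (simp add: power2_eq_square algebra_simps)
  qed
  also have "(\<Sum>i\<in>J. (x i)\<^sup>2) = ?Q"
    using J x_b x_i unfolding h_def by (simp add: sum.remove power2_commute[of "\<theta> b"])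
  also have "\<nu> / \<sigma>\<^sup>2 * (- ?Q) + \<nu> / (2 * \<sigma>\<^sup>2) * ?Q = - \<nu> / (2 * \<sigma>\<^sup>2) * ?Q"
    using \<sigma> by (simp add: field_simps)
  finally show ?thesis .
qed

lemma prob_best_lowest_mean_le:
  fixes \<theta> :: "nat \<Rightarrow> real" and A :: "nat \<Rightarrow> nat set" and N :: "nat \<Rightarrow> nat"
  assumes \<sigma>: "\<sigma> > 0" and J: "J \<subseteq> {..<K}" "b \<in> J"
    and A: "\<forall>i\<in>J. A i \<subseteq> {..<T}" and N: "\<forall>i\<in>J. N i = card (A i)"
    and \<nu>: "\<nu> > 0" "\<forall>i\<in>J. \<nu> \<le> real (N i)"
    and level: "c + (\<Sum>i\<in>J - {b}. max (c - \<theta> i) 0) = \<theta> b"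
  defines "M \<equiv> outcome_measure K \<sigma> \<theta> T"
    and "m \<equiv> \<lambda>Y. emp_mean N (\<lambda>i. \<Sum>s\<in>A i. Y (s, i))"
  shows "measure M {Y \<in> space M. \<forall>j\<in>J. m Y b \<le> m Y j}
     \<le> exp (- \<nu> / (2 * \<sigma>\<^sup>2) * ((\<theta> b - c)\<^sup>2 + (\<Sum>i\<in>J - {b}. (max (c - \<theta> i) 0)\<^sup>2)))"
proof -
  let ?I = "{..<T} \<times> {..<K}"
  define B where "B = {Y \<in> space M. \<forall>j\<in>J. m Y b \<le> m Y j}"
  define x where "x = (\<lambda>i. if i = b then - (\<Sum>j\<in>J - {b}. max (c - \<theta> j) 0) else max (c - \<theta> i) 0)"
  define coef where "coef i = \<nu> / \<sigma>\<^sup>2 * x i / real (N i)" for i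
  define \<alpha> where "\<alpha> = (\<lambda>(s, i). if i \<in> J \<and> s \<in> A i then coef i else 0)"
  have finJ: "finite J" using J finite_subset by blast
  have N_pos: "N i \<noteq> 0" if "i \<in> J" for i using \<nu> that by force
  have linear: "(\<Sum>z\<in>?I. \<alpha> z * Y z) = \<nu> / \<sigma>\<^sup>2 * (\<Sum>i\<in>J. x i * m Y i)" for Y
  proof -
    have "(\<Sum>z\<in>?I. \<alpha> z * Y z)
        = (\<Sum>z\<in>?I. if snd z \<in> J \<and> fst z \<in> A (snd z) then coef (snd z) * Y (fst z, snd z) else 0)"
      unfolding \<alpha>_def by (intro sum.cong) auto
    also have "\<dots> = (\<Sum>i\<in>J. coef i * (\<Sum>s\<in>A i. Y (s, i)))"
      using sum_restrict_pairs[OF A J(1)] by (simp add: sum_distrib_left)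
    also have "\<dots> = (\<Sum>i\<in>J. \<nu> / \<sigma>\<^sup>2 * (x i * m Y i))"
      using N_pos unfolding m_def emp_mean_def coef_def by (intro sum.cong) (auto simp: mult.commute)
    finally show ?thesis by (simp add: sum_distrib_left)
  qed
  have B_events: "B \<in> sets M"
  proof -
    have "(\<lambda>Y. m Y i) \<in> borel_measurable M" if "i \<in> J" for i
      unfolding m_def M_def using J A that by (intro measurable_emp_mean_outcome) auto
    then show ?thesis
      unfolding B_def by (intro sets.sets_Collect_finite_All[OF _ finJ]) (use J in \<open>auto\<close>)
  qed
  have B_nonneg: "\<forall>Y\<in>B. 0 \<le> (\<Sum>z\<in>?I. \<alpha> z * Y z)"
  proof
    fix Y assume "Y \<in> B"
    then have "0 \<le> (\<Sum>i\<in>J. x i * m Y i)"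
      using finJ J(2) unfolding B_def x_def
      by (intro zero_le_sum_mult_of_sum_zero) (auto simp: sum.remove)
    then show "0 \<le> (\<Sum>z\<in>?I. \<alpha> z * Y z)" unfolding linear using \<sigma> \<nu> by simp
  qed
  have "measure M B \<le> exp (\<Sum>z\<in>?I. \<alpha> z * \<theta> (snd z) + (\<alpha> z)\<^sup>2 * \<sigma>\<^sup>2 / 2)"
    using prob_outcome_le_exp[OF \<sigma> _ B_nonneg] B_events unfolding M_def by blast
  also have "(\<Sum>z\<in>?I. \<alpha> z * \<theta> (snd z) + (\<alpha> z)\<^sup>2 * \<sigma>\<^sup>2 / 2)
      = (\<Sum>i\<in>J. real (N i) * (coef i * \<theta> i + (coef i)\<^sup>2 * \<sigma>\<^sup>2 / 2))"
  proof -
    have "(\<Sum>z\<in>?I. \<alpha> z * \<theta> (snd z) + (\<alpha> z)\<^sup>2 * \<sigma>\<^sup>2 / 2)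
        = (\<Sum>z\<in>?I. if snd z \<in> J \<and> fst z \<in> A (snd z)
              then coef (snd z) * \<theta> (snd z) + (coef (snd z))\<^sup>2 * \<sigma>\<^sup>2 / 2 else 0)"
      unfolding \<alpha>_def by (intro sum.cong) auto
    also have "\<dots> = (\<Sum>i\<in>J. \<Sum>s\<in>A i. coef i * \<theta> i + (coef i)\<^sup>2 * \<sigma>\<^sup>2 / 2)"
      by (rule sum_restrict_pairs[OF A J(1)])
    finally show ?thesis using N by simp
  qed
  also have "\<dots> \<le> - \<nu> / (2 * \<sigma>\<^sup>2) * ((\<theta> b - c)\<^sup>2 + (\<Sum>i\<in>J - {b}. (max (c - \<theta> i) 0)\<^sup>2))"
    unfolding coef_def using finJ J(2) \<sigma> \<nu> level x_def by (rule tilted_exponent_le)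
  finally show ?thesis unfolding B_def by simp
qed

lemma Gamma_le_hinge_cost:
  assumes J: "J \<subseteq> {..<K}" "card J = n" "best_arm K \<theta> \<in> J"
  shows "Gamma K \<sigma> \<theta> n
     \<le> ((\<theta> (best_arm K \<theta>) - c)\<^sup>2 + (\<Sum>i\<in>J - {best_arm K \<theta>}. (max (c - \<theta> i) 0)\<^sup>2)) / (2 * \<sigma>\<^sup>2)"
proof -
  let ?b = "best_arm K \<theta>"
  let ?cost = "\<lambda>J lam. \<Sum>i\<in>J. (lam i - \<theta> i)\<^sup>2 / (2 * \<sigma>\<^sup>2)"
  let ?alt = "\<lambda>J. {lam. \<forall>i\<in>J. lam ?b \<le> lam i}"
  define lam where "lam i = (if i = ?b then c else max (\<theta> i) c)" for i
  have "finite {J. J \<subseteq> {..<K} \<and> card J = n \<and> ?b \<in> J}"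
    by (rule finite_subset[of _ "Pow {..<K}"]) auto
  then have "Gamma K \<sigma> \<theta> n \<le> Inf (?cost J ` ?alt J)"
    unfolding Gamma_def using J by (intro Min_le) auto
  also have "\<dots> \<le> ?cost J lam"
    by (rule cInf_lower) (auto simp: lam_def intro!: bdd_belowI[of _ 0] sum_nonneg)
  also have "?cost J lam = ((lam ?b - \<theta> ?b)\<^sup>2 + (\<Sum>i\<in>J - {?b}. (lam i - \<theta> i)\<^sup>2)) / (2 * \<sigma>\<^sup>2)"
    using J finite_subset[OF J(1)]
    by (simp add: sum.remove add_divide_distrib sum_divide_distrib[symmetric])
  also have "(\<Sum>i\<in>J - {?b}. (lam i - \<theta> i)\<^sup>2) = (\<Sum>i\<in>J - {?b}. (max (c - \<theta> i) 0)\<^sup>2)"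
    unfolding lam_def by (intro sum.cong) (auto simp: max_def)
  finally show ?thesis by (simp add: lam_def power2_commute)
qed

lemma best_arm:
  assumes "unique_best K \<theta>"
  shows "best_arm K \<theta> < K" and "j < K \<Longrightarrow> j \<noteq> best_arm K \<theta> \<Longrightarrow> \<theta> j < \<theta> (best_arm K \<theta>)"
proof -
  obtain i where i: "i < K" "\<forall>j<K. j \<noteq> i \<longrightarrow> \<theta> j < \<theta> i"
    using assms unfolding unique_best_def by auto
  have "best_arm K \<theta> = i"
    unfolding best_arm_def
  proof (rule the_equality)
    show "i < K \<and> (\<forall>j<K. j \<noteq> i \<longrightarrow> \<theta> j < \<theta> i)" using i by auto
    show "i' = i" if i': "i' < K \<and> (\<forall>j<K. j \<noteq> i' \<longrightarrow> \<theta> j < \<theta> i')" for i'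
    proof (rule ccontr)
      assume "i' \<noteq> i"
      then have "\<theta> i' < \<theta> i" "\<theta> i < \<theta> i'" using i i' by auto
      then show False by simp
    qed
  qed
  then show "best_arm K \<theta> < K" and "j < K \<Longrightarrow> j \<noteq> best_arm K \<theta> \<Longrightarrow> \<theta> j < \<theta> (best_arm K \<theta>)"
    using i by auto
qed

lemma sets_Collect_minimizers_eq:
  fixes f :: "'i \<Rightarrow> 'a \<Rightarrow> real"
  assumes fin: "finite C" and f: "\<forall>i\<in>C. f i \<in> borel_measurable M"
  shows "{Y \<in> space M. h {i\<in>C. \<forall>j\<in>C. f i Y \<le> f j Y} = x} \<in> sets M"
proof -
  let ?P = "\<lambda>i Y. \<forall>j\<in>C. f i Y \<le> f j Y"
  have P: "{Y \<in> space M. ?P i Y} \<in> sets M" if "i \<in> C" for i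
    by (rule sets.sets_Collect_finite_All[OF _ fin]) (use f that in \<open>auto intro: borel_measurable_le\<close>)
  have eq: "{Y \<in> space M. h {i\<in>C. ?P i Y} = x}
      = (\<Union>A\<in>{A. A \<subseteq> C \<and> h A = x}. {Y \<in> space M. \<forall>i\<in>C. i \<in> A \<longleftrightarrow> ?P i Y})"
  proof
    show "{Y \<in> space M. h {i\<in>C. ?P i Y} = x}
        \<subseteq> (\<Union>A\<in>{A. A \<subseteq> C \<and> h A = x}. {Y \<in> space M. \<forall>i\<in>C. i \<in> A \<longleftrightarrow> ?P i Y})"
    proof clarify
      fix Y assume "Y \<in> space M" "x = h {i\<in>C. ?P i Y}"
      then show "Y \<in> (\<Union>A\<in>{A. A \<subseteq> C \<and> h A = h {i\<in>C. ?P i Y}}. {Y \<in> space M. \<forall>i\<in>C. i \<in> A \<longleftrightarrow> ?P i Y})"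
        by (intro UN_I[of "{i\<in>C. ?P i Y}"]) auto
    qed
    show "(\<Union>A\<in>{A. A \<subseteq> C \<and> h A = x}. {Y \<in> space M. \<forall>i\<in>C. i \<in> A \<longleftrightarrow> ?P i Y})
        \<subseteq> {Y \<in> space M. h {i\<in>C. ?P i Y} = x}"
    proof (clarify)
      fix Y A assume "A \<subseteq> C" "Y \<in> space M" "\<forall>i\<in>C. i \<in> A \<longleftrightarrow> ?P i Y"
      then have "{i\<in>C. ?P i Y} = A" by auto
      then show "h {i\<in>C. ?P i Y} = h A" by simp
    qed
  qed
  have "{Y \<in> space M. \<forall>i\<in>C. i \<in> A \<longleftrightarrow> ?P i Y} \<in> sets M" for A
    using P by (intro sets.sets_Collect_finite_All[OF _ fin]) (auto simp: Collect_neg_eq Diff_eq[symmetric])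
  moreover have "finite {A. A \<subseteq> C \<and> h A = x}" using fin by (auto intro: finite_subset[of _ "Pow C"])
  ultimately show ?thesis unfolding eq by (intro sets.finite_UN) auto
qed

lemma emeasure_normal_density_pos:
  assumes "\<sigma> > 0" "S \<in> sets borel" "emeasure lborel S > 0"
  shows "emeasure (density lborel (normal_density \<mu> \<sigma>)) S > 0"
proof (rule ccontr)
  assume "\<not> ?thesis"
  then have "(\<integral>\<^sup>+ x. ennreal (normal_density \<mu> \<sigma> x) * indicator S x \<partial>lborel) = 0"
    using assms(2) by (simp add: emeasure_density)
  then have "AE x in lborel. ennreal (normal_density \<mu> \<sigma> x) * indicator S x = 0"
    using assms(2) by (subst nn_integral_0_iff_AE[symmetric]) auto
  moreover have "AE x in lborel. ennreal (normal_density \<mu> \<sigma> x) * indicator S x = 0 \<longrightarrow> x \<notin> S"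
    using normal_density_pos[OF assms(1), of \<mu>] by (intro AE_I2) (auto simp: indicator_def less_le)
  ultimately have "AE x in lborel. x \<notin> S" by (rule AE_mp)
  then have "emeasure lborel S = 0"
    using assms(2) by (subst (asm) AE_iff_measurable[where N = S]) auto
  then show False using assms(3) by simp
qed

lemma ennreal_prod_pos: "finite A \<Longrightarrow> (\<forall>x\<in>A. (0::ennreal) < f x) \<Longrightarrow> 0 < prod f A"
  by (induction A rule: finite_induct) (auto simp: ennreal_zero_less_mult_iff)

lemma prob_outcome_signs_pos:
  assumes "\<sigma> > 0"
  shows "0 < measure (outcome_measure K \<sigma> \<theta> T)
      (PiE ({..<T} \<times> {..<K}) (\<lambda>x. if P x then {-1<..<0} else {0<..<1}))"
proof -
  let ?I = "{..<T} \<times> {..<K}"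
  let ?A = "\<lambda>x. if P x then {-1<..<0::real} else {0<..<1}"
  interpret prob_space "outcome_measure K \<sigma> \<theta> T" by (rule prob_space_outcome_measure[OF assms])
  interpret product_sigma_finite "outcome_law \<sigma> \<theta>"
    by (rule product_sigma_finite_outcome_law[OF assms])
  have "emeasure (outcome_measure K \<sigma> \<theta> T) (PiE ?I ?A) = (\<Prod>x\<in>?I. emeasure (outcome_law \<sigma> \<theta> x) (?A x))"
    unfolding outcome_measure_eq_PiM by (rule emeasure_PiM) auto
  also have "\<dots> > 0"
    unfolding outcome_law_def
    by (intro ennreal_prod_pos ballI emeasure_normal_density_pos[OF assms]) auto
  finally show ?thesis by (simp add: measure_def enn2real_positive_iff less_top[symmetric])
qed

section \<open>Error probability and regret of the run\<close>

locale bae_instance = bae_schedule +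
  fixes \<sigma> :: real and \<theta> :: "nat \<Rightarrow> real"
  assumes \<sigma>_pos: "\<sigma> > 0" and unique_best: "unique_best K \<theta>"
begin

abbreviation M :: "(nat \<times> nat \<Rightarrow> real) measure" where "M \<equiv> outcome_measure K \<sigma> \<theta> T"
abbreviation best :: nat where "best \<equiv> best_arm K \<theta>"
abbreviation out :: "(nat \<times> nat \<Rightarrow> real) \<Rightarrow> nat" where "out \<equiv> bae_output ta te K \<beta> T"

sublocale outcome: prob_space M
  by (rule prob_space_outcome_measure[OF \<sigma>_pos])

lemma best_lt: "best < K" and best_gt: "j < K \<Longrightarrow> j \<noteq> best \<Longrightarrow> \<theta> j < \<theta> best"
  using best_arm[OF unique_best] by auto

lemma obs_sum_eq: "obs_sum p Y t = (\<lambda>i. \<Sum>s\<in>pull_times p t i. Y (s, i))"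
  by (simp add: obs_sum_def fun_eq_iff)

lemma measurable_obs_mean:
  "i < K \<Longrightarrow> t \<le> T \<Longrightarrow> (\<lambda>Y. emp_mean N (obs_sum p Y t) i) \<in> borel_measurable M"
  unfolding obs_sum_eq by (intro measurable_emp_mean_outcome pull_times_subset)

definition lowest_event :: "(nat \<Rightarrow> nat) \<Rightarrow> nat \<Rightarrow> (nat \<times> nat \<Rightarrow> real) set" where
  "lowest_event p n = {Y \<in> space M. elim_order p \<and> best \<in> survivors p n \<and>
     (\<forall>j\<in>survivors p n. emp_mean (pulls p (\<tau> n)) (obs_sum p Y (\<tau> n)) best
                          \<le> emp_mean (pulls p (\<tau> n)) (obs_sum p Y (\<tau> n)) j)}"

lemma lowest_event_empty: "\<not> (elim_order p \<and> best \<in> survivors p n) \<Longrightarrow> lowest_event p n = {}"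
  unfolding lowest_event_def by auto

lemma lowest_event_sets: assumes n: "n \<in> {2..K}" shows "lowest_event p n \<in> sets M"
proof (cases "elim_order p \<and> best \<in> survivors p n")
  case True
  have "(\<lambda>Y. emp_mean (pulls p (\<tau> n)) (obs_sum p Y (\<tau> n)) i) \<in> borel_measurable M" if "i < K" for i
    using that elim_time_le n by (intro measurable_obs_mean) auto
  then have "{Y \<in> space M. \<forall>j\<in>survivors p n. emp_mean (pulls p (\<tau> n)) (obs_sum p Y (\<tau> n)) best
                          \<le> emp_mean (pulls p (\<tau> n)) (obs_sum p Y (\<tau> n)) j} \<in> sets M"
    using best_lt by (intro sets.sets_Collect_finite_All) (auto intro!: borel_measurable_le simp: survivors_def)
  then show ?thesis using True unfolding lowest_event_def by simp
qed (simp add: lowest_event_empty)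

lemma prob_lowest_event_le:
  assumes n: "n \<in> {2..K}" and \<nu>: "2 * real K < real T * wgt K \<beta> n"
  shows "measure M (lowest_event p n) \<le> exp (- (real T * wgt K \<beta> n - 2 * real K) * Gamma K \<sigma> \<theta> n)"
proof (cases "elim_order p \<and> best \<in> survivors p n")
  case False
  then show ?thesis by (simp add: lowest_event_empty)
next
  case True
  let ?\<nu> = "real T * wgt K \<beta> n - 2 * real K"
  let ?J = "survivors p n"
  have J: "?J \<subseteq> {..<K}" "finite ?J" unfolding survivors_def by auto
  obtain c where level: "c + (\<Sum>i\<in>?J - {best}. max (c - \<theta> i) 0) = \<theta> best"
    using ex_hinge_level[of "?J - {best}" \<theta> "\<theta> best"] J by auto
  have "\<forall>i\<in>?J. ?\<nu> \<le> real (pulls p (\<tau> n) i)"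
    using pulls_lower_bound[of p n] True n by fastforce
  then have "measure M (lowest_event p n)
      \<le> exp (- ?\<nu> / (2 * \<sigma>\<^sup>2) * ((\<theta> best - c)\<^sup>2 + (\<Sum>i\<in>?J - {best}. (max (c - \<theta> i) 0)\<^sup>2)))"
    using prob_best_lowest_mean_le[OF \<sigma>_pos J(1), where b = best and A = "pull_times p (\<tau> n)"
        and N = "pulls p (\<tau> n)" and \<nu> = ?\<nu> and c = c]
      True \<nu> level pull_times_subset[OF elim_time_le] n card_pull_times
    unfolding lowest_event_def obs_sum_eq by auto
  also have "\<dots> \<le> exp (- ?\<nu> * Gamma K \<sigma> \<theta> n)"
  proof -
    have "card ?J = n" using True n unfolding elim_order_def by auto
    then have "Gamma K \<sigma> \<theta> n
        \<le> ((\<theta> best - c)\<^sup>2 + (\<Sum>i\<in>?J - {best}. (max (c - \<theta> i) 0)\<^sup>2)) / (2 * \<sigma>\<^sup>2)"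
      using Gamma_le_hinge_cost J True by blast
    then have "- ?\<nu> * (((\<theta> best - c)\<^sup>2 + (\<Sum>i\<in>?J - {best}. (max (c - \<theta> i) 0)\<^sup>2)) / (2 * \<sigma>\<^sup>2))
        \<le> - ?\<nu> * Gamma K \<sigma> \<theta> n"
      using \<nu> by (intro mult_left_mono_neg) auto
    then show ?thesis by simp
  qed
  finally show ?thesis .
qed

definition consistent_event :: "(nat \<Rightarrow> nat) \<Rightarrow> (nat \<times> nat \<Rightarrow> real) set" where
  "consistent_event p = {Y \<in> space M. consistent_order p Y}"

lemma consistent_event_sets: "consistent_event p \<in> sets M"
  unfolding consistent_event_def consistent_order_def
proof (intro sets.sets_Collect_finite_All)
  fix n assume n: "n \<in> {2..K}"
  have "\<forall>i\<in>survivors p n. (\<lambda>Y. emp_mean (pulls p (\<tau> n)) (obs_sum p Y (\<tau> n)) i) \<in> borel_measurable M"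
    using elim_time_le n by (auto intro!: measurable_obs_mean simp: survivors_def)
  from sets_Collect_minimizers_eq[OF _ this, of "te T (\<tau> n)" "p n"]
  show "{Y \<in> space M. p n = elim_choice p Y n} \<in> sets M"
    unfolding elim_choice_def lowest_mean_def by (simp add: survivors_def eq_commute)
qed simp

lemma bae_output_eq: "consistent_order p Y \<Longrightarrow> out Y = the_elem (cand p T)"
  unfolding bae_output_def by (simp add: bae_run_eq)

lemma bae_output_in_cand: "out Y \<in> cand (run_order Y) T"
proof -
  obtain i where "cand (run_order Y) T = {i}"
    using elim_order_final[OF consistent_imp_elim_order[OF consistent_run_order]] by blast
  then show ?thesis by (simp add: bae_output_eq[OF consistent_run_order])
qed

lemma bae_output_lt: "out Y < K"
  using bae_output_in_cand unfolding cand_def by blast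

lemma measurable_bae_output: "out \<in> measurable M (count_space UNIV)"
  unfolding measurable_count_space_eq2_countable
proof (intro conjI ballI)
  fix a :: nat
  have "out -` {a} \<inter> space M = (\<Union>p\<in>{p\<in>orders. the_elem (cand p T) = a}. consistent_event p)"
  proof (intro equalityI subsetI)
    fix Y assume "Y \<in> out -` {a} \<inter> space M"
    then show "Y \<in> (\<Union>p\<in>{p\<in>orders. the_elem (cand p T) = a}. consistent_event p)"
      using consistent_run_order[of Y] run_order_in_orders[of Y] bae_output_eq[of "run_order Y" Y]
      unfolding consistent_event_def by auto
  next
    fix Y assume "Y \<in> (\<Union>p\<in>{p\<in>orders. the_elem (cand p T) = a}. consistent_event p)"
    then show "Y \<in> out -` {a} \<inter> space M"
      using bae_output_eq unfolding consistent_event_def by auto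
  qed
  then show "out -` {a} \<inter> space M \<in> sets M"
    using finite_orders consistent_event_sets by (auto intro: sets.finite_UN)
qed simp

definition error_event :: "(nat \<times> nat \<Rightarrow> real) set" where
  "error_event = {Y \<in> space M. out Y \<noteq> best}"

lemma error_event_sets: "error_event \<in> sets M"
proof -
  have "out -` {best} \<inter> space M \<in> sets M"
    using measurable_bae_output by (simp add: measurable_count_space_eq2_countable)
  moreover have "error_event = space M - (out -` {best} \<inter> space M)"
    unfolding error_event_def by auto
  ultimately show ?thesis by auto
qed

text \<open>The union bound over all orders and stages avoids any conditioning on the adaptively
  chosen sample sizes.\<close>

lemma error_event_subset: "error_event \<subseteq> (\<Union>p\<in>orders. \<Union>n\<in>{2..K}. lowest_event p n)"
proof
  fix Y assume Y: "Y \<in> error_event"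
  let ?p = "run_order Y"
  have p: "elim_order ?p" by (rule consistent_imp_elim_order[OF consistent_run_order])
  have "best \<in> ?p ` {2..K}"
  proof (rule ccontr)
    assume "best \<notin> ?p ` {2..K}"
    then have "best \<in> cand ?p T" unfolding cand_final survivors_def using best_lt by auto
    then show False
      using Y bae_output_in_cand[of Y] elim_order_final[OF p] unfolding error_event_def by auto
  qed
  then obtain n where n: "n \<in> {2..K}" "?p n = best" by auto
  have "survivors ?p n \<noteq> {}" using p n unfolding elim_order_def by auto
  then have "best \<in> lowest_mean (survivors ?p n) (pulls ?p (\<tau> n)) (obs_sum ?p Y (\<tau> n))"
    using elim_choice_lowest_mean[of ?p n Y] consistent_run_order[of Y] n
    unfolding consistent_order_def by auto
  then have "Y \<in> lowest_event ?p n"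
    using Y p unfolding lowest_event_def lowest_mean_def error_event_def by auto
  then show "Y \<in> (\<Union>p\<in>orders. \<Union>n\<in>{2..K}. lowest_event p n)"
    using run_order_in_orders n by blast
qed

lemma prob_error_le: "measure M error_event \<le> (\<Sum>p\<in>orders. \<Sum>n\<in>{2..K}. measure M (lowest_event p n))"
proof -
  have "measure M error_event \<le> measure M (\<Union>p\<in>orders. \<Union>n\<in>{2..K}. lowest_event p n)"
    using error_event_subset finite_orders lowest_event_sets
    by (intro outcome.finite_measure_mono) auto
  also have "\<dots> \<le> (\<Sum>p\<in>orders. measure M (\<Union>n\<in>{2..K}. lowest_event p n))"
    using finite_orders lowest_event_sets by (intro outcome.finite_measure_subadditive_finite) auto
  also have "\<dots> \<le> (\<Sum>p\<in>orders. \<Sum>n\<in>{2..K}. measure M (lowest_event p n))"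
    using lowest_event_sets by (intro sum_mono outcome.finite_measure_subadditive_finite) auto
  finally show ?thesis .
qed

lemma integrable_theta_out: "integrable M (\<lambda>Y. \<theta> (out Y))"
proof (rule outcome.integrable_const_bound[where B = "\<Sum>j<K. \<bar>\<theta> j\<bar>"])
  show "AE Y in M. norm (\<theta> (out Y)) \<le> (\<Sum>j<K. \<bar>\<theta> j\<bar>)"
  proof (rule AE_I2)
    fix Y show "norm (\<theta> (out Y)) \<le> (\<Sum>j<K. \<bar>\<theta> j\<bar>)"
      using member_le_sum[of "out Y" "{..<K}" "\<lambda>j. \<bar>\<theta> j\<bar>"] bae_output_lt[of Y] by auto
  qed
  show "(\<lambda>Y. \<theta> (out Y)) \<in> borel_measurable M"
    by (rule measurable_compose[OF measurable_bae_output]) simp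
qed

lemma regret_eq: "bae_regret ta te K \<sigma> \<theta> \<beta> T = (\<integral>Y. \<theta> best - \<theta> (out Y) \<partial>M)"
proof -
  have "Max (\<theta> ` {..<K}) = \<theta> best"
    using best_lt best_gt by (intro Max_eqI) (auto simp: le_less)
  then show ?thesis
    unfolding bae_regret_def using integrable_theta_out by (simp add: outcome.prob_space)
qed

lemma regret_error_bounds:
  shows "(\<theta> best - Max (\<theta> ` ({..<K} - {best}))) * measure M error_event \<le> bae_regret ta te K \<sigma> \<theta> \<beta> T"
    and "bae_regret ta te K \<sigma> \<theta> \<beta> T \<le> (\<theta> best - Min (\<theta> ` {..<K})) * measure M error_event"
proof -
  let ?lo = "\<theta> best - Max (\<theta> ` ({..<K} - {best}))" and ?hi = "\<theta> best - Min (\<theta> ` {..<K})"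
  have integrable: "integrable M (\<lambda>Y. c * indicator error_event Y)" for c :: real
    using error_event_sets by (intro integrable_mult_right integrable_real_indicator) (auto simp: less_top[symmetric])
  have integral: "(\<integral>Y. c * indicator error_event Y \<partial>M) = c * measure M error_event" for c
    using error_event_sets by simp
  have gap: "?lo \<le> \<theta> best - \<theta> (out Y)" "\<theta> best - \<theta> (out Y) \<le> ?hi" if "out Y \<noteq> best" for Y
    using that bae_output_lt by (auto intro!: Max_ge Min_le)
  have "(\<integral>Y. ?lo * indicator error_event Y \<partial>M) \<le> (\<integral>Y. \<theta> best - \<theta> (out Y) \<partial>M)"
    using integrable integrable_theta_out gap(1)
    by (intro integral_mono) (auto simp: error_event_def indicator_def)
  then show "?lo * measure M error_event \<le> bae_regret ta te K \<sigma> \<theta> \<beta> T"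
    unfolding regret_eq integral .
  have "(\<integral>Y. \<theta> best - \<theta> (out Y) \<partial>M) \<le> (\<integral>Y. ?hi * indicator error_event Y \<partial>M)"
    using integrable integrable_theta_out gap(2)
    by (intro integral_mono) (auto simp: error_event_def indicator_def)
  then show "bae_regret ta te K \<sigma> \<theta> \<beta> T \<le> ?hi * measure M error_event"
    unfolding regret_eq integral .
qed

lemma min_gap_pos: "0 < \<theta> best - Max (\<theta> ` ({..<K} - {best}))"
proof -
  have "(if best = 0 then 1 else 0) \<in> {..<K} - {best}" using K_ge_2 by auto
  then have "{..<K} - {best} \<noteq> {}" by blast
  then have "Max (\<theta> ` ({..<K} - {best})) \<in> \<theta> ` ({..<K} - {best})" by (intro Max_in) auto
  then obtain j where "j < K" "j \<noteq> best" "Max (\<theta> ` ({..<K} - {best})) = \<theta> j" by auto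
  then show ?thesis using best_gt by auto
qed

lemma regret_nonneg: "0 \<le> bae_regret ta te K \<sigma> \<theta> \<beta> T"
  using regret_error_bounds(1) min_gap_pos by (meson measure_nonneg order_trans zero_le_mult_iff less_imp_le)

lemma regret_le_gap: "bae_regret ta te K \<sigma> \<theta> \<beta> T \<le> \<theta> best - Min (\<theta> ` {..<K})"
proof -
  have "0 \<le> \<theta> best - Min (\<theta> ` {..<K})" using best_lt by (auto intro!: Min_le)
  then show ?thesis
    using regret_error_bounds(2) mult_left_le[OF outcome.prob_le_1] by (meson order_trans)
qed

lemma obs_mean_pos:
  assumes "t \<le> T" "pulls p t j \<noteq> 0" "\<forall>s<T. 0 < Y (s, j)"
  shows "0 < emp_mean (pulls p t) (obs_sum p Y t) j"
proof -
  have "pull_times p t j \<noteq> {}" using assms(2) card_pull_times[of p t j] by auto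
  then have "0 < obs_sum p Y t j"
    unfolding obs_sum_def using assms(1,3) pull_times_subset[OF assms(1)] by (intro sum_pos) auto
  then show ?thesis using assms(2) by (simp add: emp_mean_def)
qed

lemma obs_mean_neg:
  assumes "t \<le> T" "pulls p t j \<noteq> 0" "\<forall>s<T. Y (s, j) < 0"
  shows "emp_mean (pulls p t) (obs_sum p Y t) j < 0"
proof -
  have "pull_times p t j \<noteq> {}" using assms(2) card_pull_times[of p t j] by auto
  then have "0 < (\<Sum>s\<in>pull_times p t j. - Y (s, j))"
    using assms(1,3) pull_times_subset[OF assms(1)] by (intro sum_pos) auto
  then have "obs_sum p Y t j < 0" unfolding obs_sum_def by (simp add: sum_negf)
  then show ?thesis using assms(2) by (simp add: emp_mean_def divide_neg_pos)
qed

lemma best_eliminated_if_signs: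
  assumes big: "3 \<le> real T * wgt K \<beta> K"
    and signs: "\<forall>s<T. Y (s, best) < 0" "\<forall>s<T. \<forall>i<K. i \<noteq> best \<longrightarrow> 0 < Y (s, i)"
  shows "out Y \<noteq> best"
proof -
  let ?p = "run_order Y"
  let ?N = "pulls ?p (\<tau> K)" and ?S = "obs_sum ?p Y (\<tau> K)"
  have K: "K \<in> {2..K}" and all: "survivors ?p K = {..<K}"
    using K_ge_2 by (auto simp: survivors_def)
  have "?N j \<noteq> 0" if "j < K" for j
  proof -
    have "real T * wgt K \<beta> K - 2 \<le> real (?N j)"
      using pulls_lower_bound[OF consistent_imp_elim_order[OF consistent_run_order[of Y]] K, of j] all that
      by auto
    then show ?thesis using big by auto
  qed
  then have "emp_mean ?N ?S best < 0" "0 < emp_mean ?N ?S j" if "j < K" "j \<noteq> best" for j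
    using obs_mean_neg[OF elim_time_le _ signs(1)] obs_mean_pos[OF elim_time_le] signs(2) that best_lt K_ge_2
    by auto
  then have "lowest_mean (survivors ?p K) ?N ?S = {best}"
    unfolding all lowest_mean_def using best_lt by (force simp: not_less less_imp_le)
  moreover have "te T (\<tau> K) {best} = best" using te_in[rule_format, of "{best}" T "\<tau> K"] by simp
  ultimately have "?p K = best"
    using consistent_run_order[of Y] K unfolding consistent_order_def elim_choice_def by auto
  then have "best \<in> ?p ` {2..K}" using K by (metis image_eqI)
  then show ?thesis
    using bae_output_in_cand[of Y] unfolding cand_final survivors_def by auto
qed

text \<open>Since ln 0 = 0 in Isabelle, a vanishing regret would give the exponent the value 0,
  so a positive exponent needs a positive regret.\<close>

lemma regret_pos:
  assumes "3 \<le> real T * wgt K \<beta> K"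
  shows "0 < bae_regret ta te K \<sigma> \<theta> \<beta> T"
proof -
  let ?E = "PiE ({..<T} \<times> {..<K}) (\<lambda>x. if snd x = best then {-1<..<0::real} else {0<..<1})"
  have E: "?E \<in> sets M"
    unfolding outcome_measure_eq_PiM by (rule sets_PiM_I_finite) simp_all
  have "?E \<subseteq> error_event"
  proof
    fix Y assume Y: "Y \<in> ?E"
    then have "Y (s, i) \<in> (if i = best then {-1<..<0} else {0<..<1})" if "s < T" "i < K" for s i
      using that by (auto simp: PiE_iff)
    then have "\<forall>s<T. Y (s, best) < 0" "\<forall>s<T. \<forall>i<K. i \<noteq> best \<longrightarrow> 0 < Y (s, i)"
      using best_lt by fastforce+
    moreover have "Y \<in> space M" using Y sets.sets_into_space[OF E] by blast
    ultimately show "Y \<in> error_event"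
      using best_eliminated_if_signs[OF assms] unfolding error_event_def by blast
  qed
  then have "measure M ?E \<le> measure M error_event"
    using error_event_sets by (rule outcome.finite_measure_mono)
  then have "0 < measure M error_event"
    using prob_outcome_signs_pos[OF \<sigma>_pos, of K \<theta> T "\<lambda>x. snd x = best"] by simp
  then show ?thesis using regret_error_bounds(1) min_gap_pos by (meson mult_pos_pos order_less_le_trans)
qed

lemma regret_le_sum_exp:
  assumes "\<forall>n\<in>{2..K}. 2 * real K < real T * wgt K \<beta> n"
  shows "bae_regret ta te K \<sigma> \<theta> \<beta> T
    \<le> (\<Sum>n\<in>{2..K}. (\<theta> best - Min (\<theta> ` {..<K})) * real K ^ (K - 1) * exp (2 * real K * Gamma K \<sigma> \<theta> n)
                    * exp (- (wgt K \<beta> n * Gamma K \<sigma> \<theta> n) * real T))"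
proof -
  let ?e = "\<lambda>n. exp (- (real T * wgt K \<beta> n - 2 * real K) * Gamma K \<sigma> \<theta> n)"
  have gap: "0 \<le> \<theta> best - Min (\<theta> ` {..<K})" using best_lt by (auto intro!: Min_le)
  have "measure M error_event \<le> (\<Sum>p\<in>orders. \<Sum>n\<in>{2..K}. ?e n)"
    using prob_error_le prob_lowest_event_le assms by (meson order_trans sum_mono)
  also have "\<dots> = real K ^ (K - 1) * (\<Sum>n\<in>{2..K}. ?e n)" by (simp add: card_orders)
  finally have "bae_regret ta te K \<sigma> \<theta> \<beta> T
      \<le> (\<theta> best - Min (\<theta> ` {..<K})) * (real K ^ (K - 1) * (\<Sum>n\<in>{2..K}. ?e n))"
    using regret_error_bounds(2) gap by (meson mult_left_mono order_trans)
  also have "\<dots> = (\<Sum>n\<in>{2..K}. (\<theta> best - Min (\<theta> ` {..<K})) * real K ^ (K - 1)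
      * exp (2 * real K * Gamma K \<sigma> \<theta> n) * exp (- (wgt K \<beta> n * Gamma K \<sigma> \<theta> n) * real T))"
    by (simp add: sum_distrib_left mult.assoc exp_add[symmetric] algebra_simps)
  finally show ?thesis .
qed

lemma regret_exp_bound:
  assumes "\<forall>n\<in>{2..K}. 2 * real K + 3 < real T * wgt K \<beta> n"
  shows "0 < bae_regret ta te K \<sigma> \<theta> \<beta> T \<and> bae_regret ta te K \<sigma> \<theta> \<beta> T
    \<le> (\<Sum>n\<in>{2..K}. (\<theta> best - Min (\<theta> ` {..<K})) * real K ^ (K - 1) * exp (2 * real K * Gamma K \<sigma> \<theta> n)
                    * exp (- (wgt K \<beta> n * Gamma K \<sigma> \<theta> n) * real T))"
proof
  have "2 * real K + 3 < real T * wgt K \<beta> K" using assms K_ge_2 by simp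
  then show "0 < bae_regret ta te K \<sigma> \<theta> \<beta> T" by (intro regret_pos) linarith
  show "bae_regret ta te K \<sigma> \<theta> \<beta> T \<le> (\<Sum>n\<in>{2..K}. (\<theta> best - Min (\<theta> ` {..<K})) * real K ^ (K - 1)
      * exp (2 * real K * Gamma K \<sigma> \<theta> n) * exp (- (wgt K \<beta> n * Gamma K \<sigma> \<theta> n) * real T))"
    using assms by (intro regret_le_sum_exp) fastforce
qed

end

section \<open>The exponent\<close>

lemma liminf_exponent_nonneg:
  fixes R :: "nat \<Rightarrow> real"
  assumes "\<forall>T. 0 \<le> R T \<and> R T \<le> D"
  shows "0 \<le> liminf (\<lambda>T. ereal (- ln (R T) / real T))"
proof -
  have "ereal (- \<bar>ln D\<bar> / real T) \<le> ereal (- ln (R T) / real T)" for T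
  proof (cases "R T = 0")
    case True
    then show ?thesis by (simp add: divide_nonpos_nonneg)
  next
    case False
    then have "ln (R T) \<le> \<bar>ln D\<bar>" using assms by (metis abs_ge_self ln_le_cancel_iff less_eq_real_def order_trans order_less_le_trans)
    then show ?thesis by (simp add: divide_right_mono)
  qed
  then have "liminf (\<lambda>T. ereal (- \<bar>ln D\<bar> / real T)) \<le> liminf (\<lambda>T. ereal (- ln (R T) / real T))"
    by (intro Liminf_mono) simp
  moreover have "liminf (\<lambda>T. ereal (- \<bar>ln D\<bar> / real T)) = 0"
    using lim_const_over_n[of "- \<bar>ln D\<bar>"] by (intro lim_imp_Liminf) (auto simp: zero_ereal_def)
  ultimately show ?thesis by simp
qed

lemma eventually_less_real_mult: "0 < w \<Longrightarrow> \<forall>\<^sub>F T in sequentially. a < real T * w"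
proof -
  assume w: "0 < w"
  obtain N :: nat where N: "a / w < real N" using reals_Archimedean2 by blast
  have "a < real T * w" if "N \<le> T" for T
  proof -
    have "real N \<le> real T" using that by simp
    then have "a / w < real T" using N by linarith
    then show ?thesis using w by (simp add: pos_divide_less_eq)
  qed
  then show ?thesis unfolding eventually_sequentially by blast
qed

lemma liminf_exponent_ge_Min:
  fixes R :: "nat \<Rightarrow> real" and c w \<gamma> :: "'a \<Rightarrow> real"
  assumes N: "finite N" "N \<noteq> {}" and cw: "\<forall>n\<in>N. 0 \<le> c n \<and> 0 < w n"
    and R: "\<And>T. \<forall>n\<in>N. a < real T * w n \<Longrightarrow>
              0 < R T \<and> R T \<le> (\<Sum>n\<in>N. c n * exp (- (w n * \<gamma> n) * real T))"
  shows "ereal (Min ((\<lambda>n. w n * \<gamma> n) ` N)) \<le> liminf (\<lambda>T. ereal (- ln (R T) / real T))"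
proof -
  define G where "G = Min ((\<lambda>n. w n * \<gamma> n) ` N)"
  define C where "C = (\<Sum>n\<in>N. c n)"
  have "\<forall>\<^sub>F T in sequentially. \<forall>n\<in>N. a < real T * w n"
    using N cw by (intro eventually_ball_finite ballI eventually_less_real_mult) auto
  then have "\<forall>\<^sub>F T in sequentially. ereal (G - ln C / real T) \<le> ereal (- ln (R T) / real T)"
    using eventually_gt_at_top[of 0]
  proof eventually_elim
    case (elim T)
    have "c n * exp (- (w n * \<gamma> n) * real T) \<le> c n * exp (- G * real T)" if "n \<in> N" for n
    proof -
      have "G \<le> w n * \<gamma> n" unfolding G_def using N that by (intro Min_le) auto
      then have "- (w n * \<gamma> n) * real T \<le> - G * real T" by (intro mult_right_mono) auto
      then show ?thesis using cw that by (intro mult_left_mono) auto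
    qed
    then have "(\<Sum>n\<in>N. c n * exp (- (w n * \<gamma> n) * real T)) \<le> (\<Sum>n\<in>N. c n * exp (- G * real T))"
      by (rule sum_mono)
    then have RC: "R T \<le> C * exp (- G * real T)"
      using R[OF elim(1)] unfolding C_def sum_distrib_right by linarith
    have R_pos: "0 < R T" using R[OF elim(1)] by simp
    then have "0 < C" using RC by (smt (verit) exp_gt_zero mult_nonpos_nonneg)
    have "ln (R T) \<le> ln (C * exp (- G * real T))" using R_pos RC by (intro ln_mono) auto
    also have "\<dots> = ln C - G * real T" using \<open>0 < C\<close> by (simp add: ln_mult_pos)
    finally have "G * real T - ln C \<le> - ln (R T)" by linarith
    then have "(G * real T - ln C) / real T \<le> - ln (R T) / real T"
      by (rule divide_right_mono) simp
    moreover have "(G * real T - ln C) / real T = G - ln C / real T"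
      using elim by (simp add: diff_divide_distrib)
    ultimately show ?case by simp
  qed
  then have "liminf (\<lambda>T. ereal (G - ln C / real T)) \<le> liminf (\<lambda>T. ereal (- ln (R T) / real T))"
    by (rule Liminf_mono)
  moreover have "liminf (\<lambda>T. ereal (G - ln C / real T)) = ereal G"
    using lim_const_over_n[of "ln C"] by (intro lim_imp_Liminf) (auto intro!: tendsto_eq_intros)
  ultimately show ?thesis unfolding G_def by simp
qed

theorem lemma1:
  fixes K :: nat and \<sigma> :: real and \<theta> \<beta> :: "nat \<Rightarrow> real"
    and ta te :: "nat \<Rightarrow> nat \<Rightarrow> nat set \<Rightarrow> nat"
  assumes "K \<ge> 2" and "\<sigma> > 0" and "unique_best K \<theta>"
    and "\<forall>n\<in>{2..K}. \<beta> n \<ge> 0" and "(\<Sum>n\<in>{2..K}. \<beta> n) = 1"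
    and "\<forall>T t A. A \<noteq> {} \<longrightarrow> ta T t A \<in> A"
    and "\<forall>T t A. A \<noteq> {} \<longrightarrow> te T t A \<in> A"
  shows "bae_exponent ta te K \<sigma> \<theta> \<beta> \<ge> ereal (Min ((\<lambda>n. wgt K \<beta> n * Gamma K \<sigma> \<theta> n) ` {2..K}))"
proof -
  let ?G = "Min ((\<lambda>n. wgt K \<beta> n * Gamma K \<sigma> \<theta> n) ` {2..K})"
  have inst: "bae_instance ta te K \<beta> \<sigma> \<theta>"
    using assms by unfold_locales auto
  show ?thesis
  proof (cases "?G > 0")
    case False
    then have "ereal ?G \<le> 0" by simp
    also have "0 \<le> bae_exponent ta te K \<sigma> \<theta> \<beta>"
      using bae_instance.regret_nonneg[OF inst] bae_instance.regret_le_gap[OF inst]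
      unfolding bae_exponent_def by (intro liminf_exponent_nonneg) blast
    finally show ?thesis .
  next
    case True
    define c where "c n = (\<theta> (best_arm K \<theta>) - Min (\<theta> ` {..<K})) * real K ^ (K - 1)
      * exp (2 * real K * Gamma K \<sigma> \<theta> n)" for n
    have "0 < wgt K \<beta> n" if n: "n \<in> {2..K}" for n
    proof -
      have "?G \<le> wgt K \<beta> n * Gamma K \<sigma> \<theta> n" using n by (intro Min_le) auto
      then have "wgt K \<beta> n \<noteq> 0" using True by auto
      then show ?thesis using wgt_nonneg[OF assms(4)] n by (simp add: less_le)
    qed
    moreover have "0 \<le> c n" for n
      unfolding c_def using best_arm(1)[OF assms(3)] by (auto intro!: Min_le)
    ultimately show ?thesis
      unfolding bae_exponent_def using assms(1)
      by (intro liminf_exponent_ge_Min[where a = "2 * real K + 3" and c = c]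
          bae_instance.regret_exp_bound[OF inst, folded c_def]) auto
  qed
qed

end
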